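(* Suppose $N \ge 3$ and let $\mathcal A$ be a real principally polarized abelian variety with level $N$ structure. Then there exist $Z \in \mathfrak h_n$ and $\gamma \in \Gamma(N)$ with $\gamma \cdot Z = \tau(Z)$, and there exists an isomorphism $\phi: \mathcal A_Z \to \mathcal A$ of real principally polarized abelian varieties with level $N$ structures, where $\mathcal A_Z = \left(A_Z, H_Z, \kappa(\gamma,Z), \{F_Z(e_i/N), F_Z(f_j/N)\}\right)$. If $N = 4m$ with $m \ge 1$, then the cohomology class $[f_{\gamma}] \in H^1(\mathbb C/\mathbb R, \Gamma(4m))$ is uniquely determined by the isomorphism class of $\mathcal A$: that is, if $\mathcal A \cong \mathcal A'$ and $(Z,\gamma)$, $(Z',\gamma')$ are pairs as in the first statement for $\mathcal A$ and $\mathcal A'$ respectively, then $[f_{\gamma}] = [f_{\gamma'}]$.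
   Context: $\mathfrak h_n$ is the Siegel upper half space of symmetric complex $n\times n$ matrices with positive definite imaginary part, on which $\mathbf{Sp}(2n,\mathbb R)$ acts by $\left(\begin{smallmatrix} A&B\\C&D\end{smallmatrix}\right)\cdot Z = (AZ+B)(CZ+D)^{-1}$. The involution $\tau$ on $\mathbf{Sp}(2n,\mathbb R)$ is $\tau\left(\begin{smallmatrix} A&B\\C&D\end{smallmatrix}\right) = \left(\begin{smallmatrix} A&-B\\-C&D\end{smallmatrix}\right)$ (written $\tilde g$), and on $\mathfrak h_n$ it is $\tau(Z) = -\overline{Z}$. $\Gamma(N)$ is the principal congruence subgroup of level $N$ in $\mathbf{Sp}(2n,\mathbb Z)$. For $\gamma$ with $\gamma\tilde\gamma = I$, $f_\gamma$ is the 1-cocycle $\mathrm{Gal}(\mathbb C/\mathbb R)\to\Gamma(4m)$ with $f_\gamma(1)=I$, $f_\gamma(\tau)=\gamma$; cocycles $f_\gamma, f_{\gamma'}$ are cohomologous iff $\gamma' = \tilde g^{-1}\gamma g$ for some $g \in \Gamma(4m)$. A real principally polarized abelian variety with level $N$ structure is a quadruple $(A=\mathbb C^n/L, H=R+iQ, \kappa, \{U_i,V_j\})$: $H$ a positive definite Hermitian form, $L$ a lattice symplectic for $Q=\mathrm{Im}\,H$, $\kappa$ an anti-linear involution of $\mathbb C^n$ with $\kappa(L)=L$ and $Q(\kappa u,\kappa v) = -Q(u,v)$, and $\{U_i,V_j\}$ a basis of $N$-torsion points with $U_i \equiv u_i/N$, $V_j \equiv v_j/N \bmod L$ for some symplectic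 basis $\{u_i,v_j\}$ of $L$, compatible with $\kappa$ in the sense $\kappa(u_i/N)\equiv -u_i/N$, $\kappa(v_j/N)\equiv v_j/N \bmod L$. An isomorphism is a complex linear map $\phi$ carrying lattice to lattice, $H$ to $H'$, with $\phi\kappa\phi^{-1}=\kappa'$, and $\phi(u_i/N)\equiv u'_i/N$, $\phi(v_j/N)\equiv v'_j/N \bmod L'$. For $Z \in \mathfrak h_n$: $F_Z:\mathbb R^n\oplus\mathbb R^n\to\mathbb C^n$, $F_Z(x,y) = Zx+y$; $L_Z = F_Z(\mathbb Z^n\oplus\mathbb Z^n)$; $A_Z = \mathbb C^n/L_Z$; $H_Z(u,v) = {}^t u(\mathrm{Im} Z)^{-1}\bar v$; $e_i,f_j$ is the standard basis of $\mathbb R^n\oplus\mathbb R^n$. If $\gamma = \left(\begin{smallmatrix} A&B\\C&D\end{smallmatrix}\right)\in\mathbf{Sp}(2n,\mathbb Z)$ satisfies $\gamma\cdot Z = \tau(Z)$, then $\kappa(\gamma,Z)(M) = {}^t(CZ+D)\overline{M}$ is a real structure on $(A_Z,H_Z)$ compatible with the polarization, and it is compatible with the standard level $N$ structure $\{F_Z(e_i/N),F_Z(f_j/N)\}$ iff $\gamma\in\Gamma(N)$. *)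

theory Defs
  imports "HOL-Analysis.Analysis"
begin

text \<open>Elements of Sp(2n) are represented by their n x n blocks (A,B,C,D);
  integral elements (Sp(2n,Z)) have entries in int. The dimension n is the
  cardinality of the finite index type 'n.\<close>

type_synonym ('n) blk = "(int^'n^'n) \<times> (int^'n^'n) \<times> (int^'n^'n) \<times> (int^'n^'n)"

definition cmat :: "int^'n^'n \<Rightarrow> complex^'n^'n" where
  "cmat M = (\<chi> i j. of_int (M$i$j))"

definition ImM :: "complex^'n^'n \<Rightarrow> real^'n^'n" where
  "ImM Z = (\<chi> i j. Im (Z$i$j))"

definition cnjv :: "complex^'n \<Rightarrow> complex^'n" where
  "cnjv v = (\<chi> i. cnj (v$i))"

definition cnjM :: "complex^'n^'n \<Rightarrow> complex^'n^'n" where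
  "cnjM Z = (\<chi> i j. cnj (Z$i$j))"

definition posdef_real :: "real^'n^'n \<Rightarrow> bool" where
  "posdef_real Y \<longleftrightarrow> (\<forall>x. x \<noteq> 0 \<longrightarrow> x \<bullet> (Y *v x) > 0)"

definition siegel :: "(complex^'n^'n) set" where
  "siegel = {Z. transpose Z = Z \<and> posdef_real (ImM Z)}"

text \<open>Symplectic: the block form of  (transpose g) J g = J.\<close>
definition symplectic_int :: "('n::finite) blk \<Rightarrow> bool" where
  "symplectic_int g = (case g of (A,B,C,D) \<Rightarrow>
      transpose A ** C = transpose C ** A \<and>
      transpose B ** D = transpose D ** B \<and>
      transpose A ** D - transpose C ** B = mat 1)"

definition Gamma :: "int \<Rightarrow> ('n::finite) blk set" where
  "Gamma N = {g. symplectic_int g \<and> (case g of (A,B,C,D) \<Rightarrow>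
      (\<forall>i j. N dvd (A$i$j - (mat 1 :: int^'n^'n)$i$j) \<and> N dvd B$i$j \<and>
             N dvd C$i$j \<and> N dvd (D$i$j - (mat 1 :: int^'n^'n)$i$j)))}"

definition sp_act :: "('n::finite) blk \<Rightarrow> complex^'n^'n \<Rightarrow> complex^'n^'n" where
  "sp_act g Z = (case g of (A,B,C,D) \<Rightarrow>
      (cmat A ** Z + cmat B) ** matrix_inv (cmat C ** Z + cmat D))"

definition tauZ :: "complex^'n^'n \<Rightarrow> complex^'n^'n" where
  "tauZ Z = - cnjM Z"

definition tilde :: "('n::finite) blk \<Rightarrow> 'n blk" where
  "tilde g = (case g of (A,B,C,D) \<Rightarrow> (A, -B, -C, D))"

definition sp_mult :: "('n::finite) blk \<Rightarrow> 'n blk \<Rightarrow> 'n blk" where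
  "sp_mult g h = (case g of (A,B,C,D) \<Rightarrow> case h of (A',B',C',D') \<Rightarrow>
      (A ** A' + B ** C', A ** B' + B ** D', C ** A' + D ** C', C ** B' + D ** D'))"

text \<open>Cohomologous cocycles f_gamma, f_gamma' in H^1(C/R, Gamma(N)):
  gamma' = tilde(g)^{-1} gamma g for some g in Gamma(N), written
  multiplicatively as tilde(g) gamma' = gamma g.\<close>
definition cohomologous :: "int \<Rightarrow> ('n::finite) blk \<Rightarrow> 'n blk \<Rightarrow> bool" where
  "cohomologous N \<gamma> \<gamma>' \<longleftrightarrow> (\<exists>g \<in> Gamma N. sp_mult (tilde g) \<gamma>' = sp_mult \<gamma> g)"

record 'n rppav =
  lat  :: "(complex^'n) set"
  herm :: "complex^'n \<Rightarrow> complex^'n \<Rightarrow> complex"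
  kap  :: "complex^'n \<Rightarrow> complex^'n"
  lvlU :: "'n \<Rightarrow> complex^'n"
  lvlV :: "'n \<Rightarrow> complex^'n"

definition pos_def_hermitian :: "(complex^'n \<Rightarrow> complex^'n \<Rightarrow> complex) \<Rightarrow> bool" where
  "pos_def_hermitian H \<longleftrightarrow>
     (\<forall>u u' v. H (u + u') v = H u v + H u' v) \<and>
     (\<forall>c u v. H (c *s u) v = c * H u v) \<and>
     (\<forall>u v. H v u = cnj (H u v)) \<and>
     (\<forall>u. u \<noteq> 0 \<longrightarrow> Re (H u u) > 0 \<and> Im (H u u) = 0)"

definition antilinear_involution :: "(complex^'n \<Rightarrow> complex^'n) \<Rightarrow> bool" where
  "antilinear_involution k \<longleftrightarrow>
     (\<forall>u v. k (u + v) = k u + k v) \<and>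
     (\<forall>c u. k (c *s u) = cnj c *s k u) \<and>
     (\<forall>u. k (k u) = u)"

definition symplectic_basis ::
  "(complex^'n) set \<Rightarrow> (complex^'n \<Rightarrow> complex^'n \<Rightarrow> real) \<Rightarrow>
   ('n \<Rightarrow> complex^'n) \<Rightarrow> ('n \<Rightarrow> complex^'n) \<Rightarrow> bool" where
  "symplectic_basis L Q u v \<longleftrightarrow>
     (\<forall>a b :: 'n \<Rightarrow> real. (\<Sum>i\<in>UNIV. a i *\<^sub>R u i + b i *\<^sub>R v i) = 0 \<longrightarrow> a = (\<lambda>_. 0) \<and> b = (\<lambda>_. 0)) \<and>
     L = {(\<Sum>i\<in>UNIV. of_int (a i) *s u i + of_int (b i) *s v i) | a b :: 'n \<Rightarrow> int. True} \<and>
     (\<forall>i j. Q (u i) (v j) = (if i = j then 1 else 0) \<and> Q (u i) (u j) = 0 \<and> Q (v i) (v j) = 0)"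

definition real_ppav_level :: "int \<Rightarrow> ('n::finite) rppav \<Rightarrow> bool" where
  "real_ppav_level N X \<longleftrightarrow>
     (let L = lat X; H = herm X; k = kap X; Q = (\<lambda>u v. Im (H u v)) in
       pos_def_hermitian H \<and>
       antilinear_involution k \<and> k ` L = L \<and> (\<forall>u v. Q (k u) (k v) = - Q u v) \<and>
       (\<exists>u v. symplectic_basis L Q u v \<and>
          (\<forall>i. lvlU X i - (1 / of_int N) *s u i \<in> L \<and> lvlV X i - (1 / of_int N) *s v i \<in> L) \<and>
          (\<forall>i. k ((1 / of_int N) *s u i) + (1 / of_int N) *s u i \<in> L \<and>
               k ((1 / of_int N) *s v i) - (1 / of_int N) *s v i \<in> L)))"

text \<open>Isomorphism phi : X \<rightarrow> X' (the level points U_i, V_j are representatives of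
  u_i/N, v_j/N modulo the lattice).\<close>
definition rppav_iso :: "('n::finite) rppav \<Rightarrow> 'n rppav \<Rightarrow> (complex^'n \<Rightarrow> complex^'n) \<Rightarrow> bool" where
  "rppav_iso X X' \<phi> \<longleftrightarrow>
     (\<forall>u v. \<phi> (u + v) = \<phi> u + \<phi> v) \<and> (\<forall>c u. \<phi> (c *s u) = c *s \<phi> u) \<and> bij \<phi> \<and>
     \<phi> ` lat X = lat X' \<and>
     (\<forall>u v. herm X' (\<phi> u) (\<phi> v) = herm X u v) \<and>
     \<phi> \<circ> kap X = kap X' \<circ> \<phi> \<and>
     (\<forall>i. \<phi> (lvlU X i) - lvlU X' i \<in> lat X' \<and> \<phi> (lvlV X i) - lvlV X' i \<in> lat X')"

definition F_Z :: "complex^'n^'n \<Rightarrow> real^'n \<Rightarrow> real^'n \<Rightarrow> complex^'n" where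
  "F_Z Z x y = Z *v (\<chi> i. complex_of_real (x$i)) + (\<chi> i. complex_of_real (y$i))"

definition L_Z :: "complex^'n^'n \<Rightarrow> (complex^'n) set" where
  "L_Z Z = {F_Z Z (\<chi> i. of_int (a i)) (\<chi> i. of_int (b i)) | a b :: 'n \<Rightarrow> int. True}"

definition H_Z :: "complex^'n^'n \<Rightarrow> complex^'n \<Rightarrow> complex^'n \<Rightarrow> complex" where
  "H_Z Z u v = (\<Sum>i\<in>UNIV. \<Sum>j\<in>UNIV.
      u$i * complex_of_real (matrix_inv (ImM Z) $i$j) * cnj (v$j))"

definition kappa_Z :: "('n::finite) blk \<Rightarrow> complex^'n^'n \<Rightarrow> complex^'n \<Rightarrow> complex^'n" where
  "kappa_Z g Z M = (case g of (A,B,C,D) \<Rightarrow> transpose (cmat C ** Z + cmat D) *v cnjv M)"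

definition AZ :: "int \<Rightarrow> ('n::finite) blk \<Rightarrow> complex^'n^'n \<Rightarrow> 'n rppav" where
  "AZ N g Z = \<lparr> lat = L_Z Z, herm = H_Z Z, kap = kappa_Z g Z,
      lvlU = (\<lambda>i. F_Z Z (axis i (1 / of_int N)) 0),
      lvlV = (\<lambda>j. F_Z Z 0 (axis j (1 / of_int N))) \<rparr>"

end

theory Submission
  imports Defs
begin

text \<open>
  Choose a symplectic basis \<open>(u, v)\<close> of the lattice adapted to the level structure. On the real
  span of the \<open>v\<^sub>j\<close> the form \<open>H\<close> is real and positive definite, so the matrix \<open>V\<close> with
  columns \<open>v\<^sub>j\<close> is invertible, and \<open>Z = V\<^sup>-\<^sup>1 U\<close> (\<open>U\<close> with columns \<open>u\<^sub>i\<close>) is a point of the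
  Siegel space whose \<open>(Im Z)\<^sup>-\<^sup>1\<close> is the Gram matrix of the \<open>v\<^sub>j\<close>. Then \<open>V\<close> maps \<open>A\<^sub>Z\<close> onto \<open>A\<close>,
  sending the standard frame \<open>(Z e\<^sub>i, e\<^sub>j)\<close> to \<open>(u\<^sub>i, v\<^sub>j)\<close>. In these real coordinates the real
  structure is an integral anti-symplectic involution \<open>K \<equiv> diag(-1, 1) mod N\<close>, and
  \<open>\<gamma> = E K\<^sup>T \<in> \<Gamma>(N)\<close>. For any \<open>\<gamma>\<close> with \<open>CZ + D\<close> unitary (which holds as soon as \<open>\<kappa>(\<gamma>, Z)\<close> is
  an involution), \<open>\<kappa>(\<gamma>, Z)\<close> acts on the standard frame as the integral matrix \<open>\<gamma>\<^sup>T E\<close> exactly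
  when \<open>\<gamma>\<cdot>Z = \<tau>(Z)\<close>.

  For uniqueness, an isomorphism \<open>A\<^sub>Z \<cong> A\<^sub>Z'\<close> has an integral coordinate matrix \<open>P\<close>; it is
  symplectic because it preserves \<open>Im H\<close>, congruent to \<open>1\<close> mod \<open>N\<close> because it respects the level
  structures, and it intertwines \<open>\<gamma>\<^sup>T E\<close> with \<open>\<gamma>'\<^sup>T E\<close> because it commutes with the real
  structures. Transposing the last relation gives \<open>tilde g \<gamma>' = \<gamma> g\<close> for \<open>g = P\<^sup>T \<in> \<Gamma>(N)\<close>.
\<close>

lemma matrix_add_rdistrib: "((A::'a::semiring_1^'n^'m) + B) ** C = A ** C + B ** C"
  by (simp add: matrix_matrix_mult_def vec_eq_iff distrib_right sum.distrib)

lemma matrix_neg_mul: "(- (A::'a::ring_1^'n^'m)) ** B = - (A ** B)"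
  by (simp add: matrix_matrix_mult_def vec_eq_iff sum_negf)

lemma matrix_mul_neg: "(A::'a::ring_1^'n^'m) ** (- B) = - (A ** B)"
  by (simp add: matrix_matrix_mult_def vec_eq_iff sum_negf)

lemma matrix_neg_mul_vector: "(- (A::'a::ring_1^'n^'m)) *v x = - (A *v x)"
  by (simp add: matrix_vector_mult_def vec_eq_iff sum_negf)

lemma matrix_vector_mult_scaleR_gen:
  "(A::'a::real_algebra_1^'n^'m) *v (c *\<^sub>R x) = c *\<^sub>R (A *v x)"
  by (rule linear_scale[OF matrix_vector_mul_linear])

lemmas matrix_mul_simps = matrix_add_rdistrib matrix_add_ldistrib matrix_neg_mul matrix_mul_neg
  matrix_mul_assoc

lemma transpose_add: "transpose ((A::'a::semiring_1^'n^'m) + B) = transpose A + transpose B"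
  by (simp add: transpose_def vec_eq_iff)

lemma transpose_uminus: "transpose (- (A::'a::ring_1^'n^'m)) = - transpose A"
  by (simp add: transpose_def vec_eq_iff)

lemma transpose_diff: "transpose ((A::'a::ring_1^'n^'m) - B) = transpose A - transpose B"
  by (simp add: transpose_def vec_eq_iff)

lemma transpose_0 [simp]: "transpose (0::'a::zero^'n^'m) = 0"
  by (simp add: transpose_def vec_eq_iff)

lemma transpose_nth: "transpose A $ i $ j = A $ j $ i"
  by (simp add: transpose_def)

lemma matrix_vector_mult_axis_nth: "((A::'a::semiring_1^'n^'m) *v axis i 1) $ k = A $ k $ i"
proof -
  have "(\<Sum>j\<in>UNIV. A $ k $ j * axis i 1 $ j) = (\<Sum>j\<in>UNIV. if j = i then A $ k $ j else 0)"
    by (rule sum.cong) (auto simp: axis_def)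
  then show ?thesis by (simp add: matrix_vector_mult_def)
qed

lemma matrix_vector_mult_axis: "(A::'a::semiring_1^'n^'m) *v axis i 1 = column i A"
  by (simp add: vec_eq_iff matrix_vector_mult_axis_nth column_def)

lemma matrix_eq_iff_columns: "(A::'a::semiring_1^'n^'m) = B \<longleftrightarrow> (\<forall>i. column i A = column i B)"
  by (auto simp: vec_eq_iff column_def)

lemma matrix_inv_unique:
  fixes A B :: "'a::semiring_1^'n^'n"
  assumes "A ** B = mat 1" "B ** A = mat 1"
  shows "matrix_inv A = B"
proof -
  have "A ** matrix_inv A = mat 1 \<and> matrix_inv A ** A = mat 1"
    unfolding matrix_inv_def by (rule someI[of _ B]) (use assms in blast)
  then have "matrix_inv A = matrix_inv A ** (A ** B)" "(matrix_inv A ** A) ** B = B"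
    using assms by simp_all
  then show ?thesis by (simp add: matrix_mul_assoc)
qed

lemma cmat_transpose: "cmat (transpose A) = transpose (cmat A)"
  by (simp add: cmat_def transpose_def vec_eq_iff)

lemma cnjM_mult: "cnjM (A ** B) = cnjM A ** cnjM B"
  by (simp add: cnjM_def matrix_matrix_mult_def vec_eq_iff)

lemma cnjM_transpose: "cnjM (transpose A) = transpose (cnjM A)"
  by (simp add: cnjM_def transpose_def vec_eq_iff)

lemma cnjM_cnjM [simp]: "cnjM (cnjM A) = A"
  by (simp add: cnjM_def vec_eq_iff)

lemma cnjM_mat_1 [simp]: "cnjM (mat 1) = mat 1"
  by (simp add: cnjM_def mat_def vec_eq_iff)

lemma cnjv_mult: "cnjv (A *v x) = cnjM A *v cnjv x"
  by (simp add: cnjv_def cnjM_def matrix_vector_mult_def vec_eq_iff)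

lemma cnjv_cnjv [simp]: "cnjv (cnjv x) = x"
  by (simp add: cnjv_def vec_eq_iff)

lemma cnjv_add: "cnjv (x + y) = cnjv x + cnjv y"
  by (simp add: cnjv_def vec_eq_iff)

lemma cnjv_smult: "cnjv (c *s x) = cnj c *s cnjv x"
  by (simp add: cnjv_def vec_eq_iff)

definition cvec :: "real^'n \<Rightarrow> complex^'n" where
  "cvec x = (\<chi> i. complex_of_real (x $ i))"

definition rmat :: "int^'n^'m \<Rightarrow> real^'n^'m" where
  "rmat M = (\<chi> i j. real_of_int (M $ i $ j))"

lemma cvec_add: "cvec (x + y) = cvec x + cvec y"
  by (simp add: cvec_def vec_eq_iff)

lemma cvec_scaleR: "cvec (r *\<^sub>R x) = r *\<^sub>R cvec x"
  by (simp add: cvec_def vec_eq_iff of_real_def)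

lemma cvec_0 [simp]: "cvec 0 = 0"
  by (simp add: cvec_def vec_eq_iff)

lemma cvec_diff: "cvec (x - y) = cvec x - cvec y"
  by (simp add: cvec_def vec_eq_iff)

lemma axis_eq_scaleR: "axis i (c::real) = c *\<^sub>R axis i 1"
  by (simp add: axis_def vec_eq_iff)

lemma cvec_axis: "cvec (axis i 1) = axis i 1"
  by (simp add: cvec_def axis_def vec_eq_iff)

lemma cnjv_cvec [simp]: "cnjv (cvec x) = cvec x"
  by (simp add: cnjv_def cvec_def vec_eq_iff)

lemma cmat_mult_cvec: "cmat M *v cvec x = cvec (rmat M *v x)"
  by (simp add: cmat_def rmat_def cvec_def matrix_vector_mult_def vec_eq_iff)

lemma rmat_mult: "rmat (A ** B) = rmat A ** rmat B"
  by (simp add: rmat_def matrix_matrix_mult_def vec_eq_iff)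

lemma rmat_add: "rmat (A + B) = rmat A + rmat B"
  by (simp add: rmat_def vec_eq_iff)

lemma rmat_uminus: "rmat (- A) = - rmat A"
  by (simp add: rmat_def vec_eq_iff)

lemma rmat_transpose: "rmat (transpose A) = transpose (rmat A)"
  by (simp add: rmat_def transpose_def vec_eq_iff)

lemma rmat_mat_1 [simp]: "rmat (mat 1) = mat 1"
  by (simp add: rmat_def mat_def vec_eq_iff)

lemma rmat_0 [simp]: "rmat 0 = 0"
  by (simp add: rmat_def vec_eq_iff)

lemma complex_matrix_eq_iff_on_real:
  "(A::complex^'n^'m) = B \<longleftrightarrow> (\<forall>x. A *v cvec x = B *v cvec x)"
  by (metis cvec_axis matrix_eq_iff_columns matrix_vector_mult_axis)

definition blk_one :: "('n::finite) blk" where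
  "blk_one = (mat 1, 0, 0, mat 1)"

definition blk_J :: "('n::finite) blk" where
  "blk_J = (0, mat 1, - mat 1, 0)"

definition blk_E :: "('n::finite) blk" where
  "blk_E = (- mat 1, 0, 0, mat 1)"

definition blk_transpose :: "('n::finite) blk \<Rightarrow> 'n blk" where
  "blk_transpose g = (case g of (A,B,C,D) \<Rightarrow> (transpose A, transpose C, transpose B, transpose D))"

definition blk_neg :: "('n::finite) blk \<Rightarrow> 'n blk" where
  "blk_neg g = (case g of (A,B,C,D) \<Rightarrow> (-A, -B, -C, -D))"

lemma sp_mult_assoc: "sp_mult (sp_mult a b) c = sp_mult a (sp_mult b c)"
  by (cases a; cases b; cases c) (simp add: sp_mult_def matrix_mul_simps add_ac)

lemma sp_mult_one_left [simp]: "sp_mult blk_one a = a"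
  by (cases a) (simp add: sp_mult_def blk_one_def)

lemma sp_mult_one_right [simp]: "sp_mult a blk_one = a"
  by (cases a) (simp add: sp_mult_def blk_one_def)

lemma sp_mult_neg_left: "sp_mult (blk_neg a) b = blk_neg (sp_mult a b)"
  by (cases a; cases b) (simp add: sp_mult_def blk_neg_def matrix_mul_simps)

lemma sp_mult_neg_right: "sp_mult a (blk_neg b) = blk_neg (sp_mult a b)"
  by (cases a; cases b) (simp add: sp_mult_def blk_neg_def matrix_mul_simps)

lemma blk_neg_neg [simp]: "blk_neg (blk_neg a) = a"
  by (cases a) (simp add: blk_neg_def)

lemma blk_transpose_sp_mult: "blk_transpose (sp_mult a b) = sp_mult (blk_transpose b) (blk_transpose a)"
  by (cases a; cases b)
    (simp add: sp_mult_def blk_transpose_def matrix_transpose_mul transpose_add add_ac)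

lemma blk_transpose_transpose [simp]: "blk_transpose (blk_transpose a) = a"
  by (cases a) (simp add: blk_transpose_def)

lemma blk_transpose_one [simp]: "blk_transpose blk_one = blk_one"
  by (simp add: blk_transpose_def blk_one_def)

lemma blk_transpose_E [simp]: "blk_transpose blk_E = blk_E"
  by (simp add: blk_transpose_def blk_E_def transpose_uminus)

lemma sp_mult_J_J: "sp_mult blk_J blk_J = blk_neg blk_one"
  by (simp add: sp_mult_def blk_J_def blk_one_def blk_neg_def matrix_mul_simps)

lemma sp_mult_E_E: "sp_mult blk_E blk_E = blk_one"
  by (simp add: sp_mult_def blk_E_def blk_one_def matrix_mul_simps)

lemma sp_mult_E_J_E: "sp_mult blk_E (sp_mult blk_J blk_E) = blk_neg blk_J"
  by (simp add: sp_mult_def blk_E_def blk_J_def blk_neg_def matrix_mul_simps)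

lemma tilde_eq_E_conj: "tilde g = sp_mult blk_E (sp_mult g blk_E)"
  by (cases g) (simp add: tilde_def sp_mult_def blk_E_def matrix_mul_simps)

lemma symplectic_int_iff:
  "symplectic_int g \<longleftrightarrow> sp_mult (blk_transpose g) (sp_mult blk_J g) = blk_J"
proof (cases g)
  case (fields A B C D)
  have "sp_mult (blk_transpose g) (sp_mult blk_J g) =
    (transpose A ** C - transpose C ** A, transpose A ** D - transpose C ** B,
     - transpose (transpose A ** D - transpose C ** B), transpose B ** D - transpose D ** B)"
    by (simp add: fields sp_mult_def blk_transpose_def blk_J_def matrix_mul_simps
        matrix_transpose_mul transpose_diff)
  then show ?thesis
    by (auto simp: fields symplectic_int_def blk_J_def)
qed

lemma sp_mult_inverse_unique:
  assumes "sp_mult L P = blk_one" "sp_mult P R = blk_one"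
  shows "L = R"
  by (metis assms sp_mult_assoc sp_mult_one_left sp_mult_one_right)

text \<open>A right inverse of \<open>P\<close> is assumed because the relation \<open>P\<^sup>T J P = \<plusminus>J\<close> only exhibits the
  left inverse \<open>\<mp>J P\<^sup>T J\<close>; the two then agree.\<close>

lemma symplectic_transpose:
  assumes "sp_mult (blk_transpose P) (sp_mult blk_J P) = blk_J" "sp_mult P Q = blk_one"
  shows "sp_mult P (sp_mult blk_J (blk_transpose P)) = blk_J"
proof -
  have "sp_mult (blk_neg (sp_mult blk_J (sp_mult (blk_transpose P) blk_J))) P = blk_one"
    using assms(1) by (simp add: sp_mult_assoc sp_mult_neg_left sp_mult_J_J)
  then have "blk_neg (sp_mult blk_J (sp_mult (blk_transpose P) blk_J)) = Q"
    using assms(2) by (rule sp_mult_inverse_unique)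
  then have "sp_mult P (blk_neg (sp_mult blk_J (sp_mult (blk_transpose P) blk_J))) = blk_one"
    using assms(2) by simp
  then have "sp_mult (sp_mult P (sp_mult blk_J (blk_transpose P))) blk_J = blk_neg blk_one"
    by (metis blk_neg_neg sp_mult_assoc sp_mult_neg_right)
  then have "sp_mult (sp_mult (sp_mult P (sp_mult blk_J (blk_transpose P))) blk_J) blk_J
      = blk_neg blk_J"
    by (simp add: sp_mult_neg_left)
  then show ?thesis
    by (simp add: sp_mult_assoc sp_mult_J_J sp_mult_neg_right) (metis blk_neg_neg)
qed

lemma antisymplectic_transpose:
  assumes "sp_mult (blk_transpose K) (sp_mult blk_J K) = blk_neg blk_J" "sp_mult K K = blk_one"
  shows "sp_mult K (sp_mult blk_J (blk_transpose K)) = blk_neg blk_J"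
proof -
  have "sp_mult (sp_mult blk_J (sp_mult (blk_transpose K) blk_J)) K = blk_one"
    using assms(1) by (simp add: sp_mult_assoc sp_mult_neg_right sp_mult_J_J)
  then have "sp_mult blk_J (sp_mult (blk_transpose K) blk_J) = K"
    using assms(2) by (rule sp_mult_inverse_unique)
  then have "sp_mult (sp_mult (sp_mult K (sp_mult blk_J (blk_transpose K))) blk_J) blk_J
      = sp_mult blk_one blk_J"
    using assms(2) by (simp add: sp_mult_assoc)
  then show ?thesis
    by (simp add: sp_mult_assoc sp_mult_J_J sp_mult_neg_right) (metis blk_neg_neg)
qed

definition blk_act :: "('n::finite) blk \<Rightarrow> ((real^'n) \<times> (real^'n)) \<Rightarrow> ((real^'n) \<times> (real^'n))" where
  "blk_act g p = (case g of (A,B,C,D) \<Rightarrow>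
     (rmat A *v fst p + rmat B *v snd p, rmat C *v fst p + rmat D *v snd p))"

lemma linear_blk_act: "linear (blk_act g)"
  by (cases g) (auto intro!: linearI simp: blk_act_def algebra_simps matrix_vector_mult_scaleR_gen)

lemma blk_act_sp_mult: "blk_act (sp_mult a b) p = blk_act a (blk_act b p)"
  by (cases a; cases b)
    (simp add: blk_act_def sp_mult_def rmat_mult rmat_add matrix_vector_mult_add_rdistrib
      matrix_vector_right_distrib matrix_vector_mul_assoc add_ac)

lemma blk_act_one [simp]: "blk_act blk_one p = p"
  by (simp add: blk_act_def blk_one_def)

lemma blk_act_neg: "blk_act (blk_neg g) p = - blk_act g p"
  by (cases g) (simp add: blk_act_def blk_neg_def rmat_uminus matrix_neg_mul_vector)

lemma blk_act_J: "blk_act blk_J (x, y) = (y, - x)"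
  by (simp add: blk_act_def blk_J_def rmat_uminus matrix_neg_mul_vector)

lemma blk_act_inject:
  assumes "\<And>p. blk_act g p = blk_act h p"
  shows "g = h"
proof -
  obtain A B C D A' B' C' D' where g: "g = (A,B,C,D)" and h: "h = (A',B',C',D')"
    by (cases g; cases h)
  have "rmat A *v x = rmat A' *v x \<and> rmat C *v x = rmat C' *v x \<and>
        rmat B *v x = rmat B' *v x \<and> rmat D *v x = rmat D' *v x" for x
    using assms[of "(x, 0)"] assms[of "(0, x)"] by (simp add: g h blk_act_def)
  then have "rmat A = rmat A' \<and> rmat B = rmat B' \<and> rmat C = rmat C' \<and> rmat D = rmat D'"
    by (simp add: matrix_eq)
  then show ?thesis
    by (simp add: g h rmat_def vec_eq_iff)
qed

lemma inner_blk_act: "blk_act g p \<bullet> q = p \<bullet> blk_act (blk_transpose g) q"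
proof -
  have *: "(M *v x) \<bullet> y = x \<bullet> (transpose M *v y)" for M :: "real^'n^'n" and x y
    by (metis dot_lmul_matrix inner_commute transpose_matrix_vector)
  show ?thesis
    by (cases g; cases p; cases q)
      (simp add: blk_act_def blk_transpose_def inner_add_left inner_add_right * rmat_transpose
        del: transpose_matrix_vector)
qed

lemma blk_eq_if_inner_blk_act_eq:
  assumes "\<And>p q. p \<bullet> blk_act g q = p \<bullet> blk_act h q"
  shows "g = h"
  using assms by (metis blk_act_inject vector_eq_ldot)

definition symp_form :: "((real^'n) \<times> (real^'n)) \<Rightarrow> ((real^'n) \<times> (real^'n)) \<Rightarrow> real" where
  "symp_form p q = fst p \<bullet> snd q - snd p \<bullet> fst q"

lemma symp_form_eq_inner: "symp_form p q = p \<bullet> blk_act blk_J q"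
  by (cases p; cases q) (simp add: symp_form_def blk_act_J)

lemma bilinear_symp_form: "bilinear symp_form"
  by (auto simp: bilinear_def symp_form_def intro!: linearI simp: algebra_simps inner_add_left
      inner_add_right)

lemma symplectic_if_preserves_symp_form:
  assumes "\<And>p q. symp_form (blk_act g p) (blk_act g q) = symp_form p q"
  shows "sp_mult (blk_transpose g) (sp_mult blk_J g) = blk_J"
  using assms by (intro blk_eq_if_inner_blk_act_eq)
    (simp add: symp_form_eq_inner blk_act_sp_mult inner_blk_act[symmetric])

lemma antisymplectic_if_reverses_symp_form:
  assumes "\<And>p q. symp_form (blk_act g p) (blk_act g q) = - symp_form p q"
  shows "sp_mult (blk_transpose g) (sp_mult blk_J g) = blk_neg blk_J"
  using assms by (intro blk_eq_if_inner_blk_act_eq)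
    (simp add: symp_form_eq_inner blk_act_sp_mult blk_act_neg inner_blk_act[symmetric])

lemma blk_act_E: "blk_act blk_E (x, y) = (- x, y)"
  by (simp add: blk_act_def blk_E_def rmat_uminus matrix_neg_mul_vector)

definition blk_cong :: "int \<Rightarrow> ('n::finite) blk \<Rightarrow> 'n blk \<Rightarrow> bool" where
  "blk_cong N g h \<longleftrightarrow> (case g of (A,B,C,D) \<Rightarrow> case h of (A',B',C',D') \<Rightarrow>
     (\<forall>i j. N dvd A$i$j - A'$i$j \<and> N dvd B$i$j - B'$i$j \<and>
            N dvd C$i$j - C'$i$j \<and> N dvd D$i$j - D'$i$j))"

lemma Gamma_iff: "g \<in> Gamma N \<longleftrightarrow> symplectic_int g \<and> blk_cong N g blk_one"
  by (cases g) (simp add: Gamma_def blk_cong_def blk_one_def)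

lemma blk_cong_transpose: "blk_cong N g h \<Longrightarrow> blk_cong N (blk_transpose g) (blk_transpose h)"
  by (cases g; cases h) (simp add: blk_cong_def blk_transpose_def transpose_nth)

lemma sp_mult_E_left: "sp_mult blk_E (A,B,C,D) = (-A, -B, C, D)"
  by (simp add: sp_mult_def blk_E_def matrix_mul_simps)

lemma blk_cong_E_mult: "blk_cong N g h \<Longrightarrow> blk_cong N (sp_mult blk_E g) (sp_mult blk_E h)"
  by (cases g; cases h) (auto simp: blk_cong_def sp_mult_E_left dvd_diff_commute)

lemma Basis_pair_vec_cases:
  assumes "b \<in> (Basis :: ((real^'n) \<times> (real^'n)) set)"
  obtains i where "b = (axis i 1, 0)" | i where "b = (0, axis i 1)"
  using assms by (auto simp: Basis_prod_def Basis_vec_def)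

lemma linear_eq_on_axes:
  fixes f g :: "(real^'n) \<times> (real^'n) \<Rightarrow> 'b::real_vector"
  assumes "linear f" "linear g"
    and "\<And>i. f (axis i 1, 0) = g (axis i 1, 0)" "\<And>i. f (0, axis i 1) = g (0, axis i 1)"
  shows "f = g"
  using assms by (metis linear_eq_stdbasis Basis_pair_vec_cases)

definition hermitian_form :: "(complex^'n \<Rightarrow> complex^'n \<Rightarrow> complex) \<Rightarrow> bool" where
  "hermitian_form H \<longleftrightarrow> (\<forall>u u' v. H (u + u') v = H u v + H u' v) \<and>
     (\<forall>c u v. H (c *s u) v = c * H u v) \<and> (\<forall>u v. H v u = cnj (H u v))"

lemma hermitian_form_if_pos_def: "pos_def_hermitian H \<Longrightarrow> hermitian_form H"
  unfolding pos_def_hermitian_def hermitian_form_def by blast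

lemma scaleR_eq_smult: "r *\<^sub>R (u::complex^'n) = complex_of_real r *s u"
  by (simp add: vec_eq_iff scaleR_conv_of_real[where 'a=complex])

context
  fixes H :: "complex^'n \<Rightarrow> complex^'n \<Rightarrow> complex"
  assumes H: "hermitian_form H"
begin

lemma hermitian_form_add_left: "H (u + u') v = H u v + H u' v"
  using H unfolding hermitian_form_def by blast

lemma hermitian_form_smult_left: "H (c *s u) v = c * H u v"
  using H unfolding hermitian_form_def by blast

lemma hermitian_form_cnj: "H v u = cnj (H u v)"
  using H unfolding hermitian_form_def by blast

lemma hermitian_form_add_right: "H u (v + v') = H u v + H u v'"
  by (metis complex_cnj_add hermitian_form_add_left hermitian_form_cnj)

lemma hermitian_form_smult_right: "H u (c *s v) = cnj c * H u v"
  by (metis complex_cnj_mult hermitian_form_cnj hermitian_form_smult_left)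

lemma linear_hermitian_form_left: "linear (\<lambda>u. H u v)"
  by (rule linearI) (simp_all add: hermitian_form_add_left hermitian_form_smult_left
      scaleR_eq_smult scaleR_conv_of_real)

lemma linear_hermitian_form_right: "linear (H u)"
  by (rule linearI) (simp_all add: hermitian_form_add_right hermitian_form_smult_right
      scaleR_eq_smult scaleR_conv_of_real)

lemma hermitian_form_sum_left: "H (\<Sum>i\<in>S. f i) v = (\<Sum>i\<in>S. H (f i) v)"
  using linear_sum[OF linear_hermitian_form_left] .

lemma hermitian_form_sum_right: "H u (\<Sum>i\<in>S. f i) = (\<Sum>i\<in>S. H u (f i))"
  using linear_sum[OF linear_hermitian_form_right] .

lemma hermitian_form_0_left: "H 0 v = 0"
  using linear_0[OF linear_hermitian_form_left] .

lemma bilinear_Im_hermitian_form: "bilinear (\<lambda>p q. Im (H (f p) (f q)))" if "linear f"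
  unfolding bilinear_def
  using linear_compose[OF linear_compose[OF that linear_hermitian_form_right]
      bounded_linear_Im[THEN bounded_linear.linear]]
    linear_compose[OF linear_compose[OF that linear_hermitian_form_left]
      bounded_linear_Im[THEN bounded_linear.linear]]
  by (simp add: o_def)

end

definition vec_clinear :: "(complex^'n \<Rightarrow> complex^'m) \<Rightarrow> bool" where
  "vec_clinear f \<longleftrightarrow> (\<forall>u v. f (u + v) = f u + f v) \<and> (\<forall>c u. f (c *s u) = c *s f u)"

lemma vec_clinear_add: "vec_clinear f \<Longrightarrow> f (u + v) = f u + f v"
  by (simp add: vec_clinear_def)

lemma vec_clinear_smult: "vec_clinear f \<Longrightarrow> f (c *s u) = c *s f u"
  by (simp add: vec_clinear_def)

lemma linear_if_vec_clinear: "vec_clinear f \<Longrightarrow> linear f"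
  by (rule linearI) (simp_all add: vec_clinear_def scaleR_eq_smult)

lemma vec_clinear_diff: "vec_clinear f \<Longrightarrow> f (u - v) = f u - f v"
  using linear_diff[OF linear_if_vec_clinear] .

lemma vec_clinear_matrix_vector_mult: "vec_clinear (\<lambda>x. A *v x)"
  by (simp add: vec_clinear_def matrix_vector_right_distrib)
    (simp add: matrix_vector_mult_def vec_eq_iff sum_distrib_left mult_ac)

lemma vec_clinear_inverse:
  assumes "vec_clinear f" "\<And>x. f (g x) = x" "\<And>x. g (f x) = x"
  shows "vec_clinear g"
  using assms unfolding vec_clinear_def by metis

lemma antilinear_eq_on_axes:
  fixes f g :: "complex^'n \<Rightarrow> complex^'m"
  assumes "\<And>x y. f (x + y) = f x + f y" "\<And>c x. f (c *s x) = cnj c *s f x"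
    and "\<And>x y. g (x + y) = g x + g y" "\<And>c x. g (c *s x) = cnj c *s g x"
    and "\<And>j. f (axis j 1) = g (axis j 1)"
  shows "f x = g x"
proof -
  have "linear f" "linear g"
    using assms(1-4) by (auto intro!: linearI simp: scaleR_eq_smult)
  then have "f x = (\<Sum>i\<in>UNIV. cnj (x$i) *s f (axis i 1))" "g x = (\<Sum>i\<in>UNIV. cnj (x$i) *s g (axis i 1))"
    using basis_expansion[of x] assms(2,4) by (metis (no_types, lifting) linear_sum sum.cong)+
  then show ?thesis
    using assms(5) by simp
qed

lemma linear_if_antilinear_involution: "antilinear_involution k \<Longrightarrow> linear k"
  unfolding antilinear_involution_def by (auto intro!: linearI simp: scaleR_eq_smult)

lemma one_over_of_int_smult: "(1 / of_int N :: complex) *s w = (1 / real_of_int N) *\<^sub>R w"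
  by (simp add: scaleR_eq_smult)

section \<open>Coordinates with respect to a symplectic basis\<close>

definition frame :: "('n::finite \<Rightarrow> complex^'n) \<Rightarrow> ('n \<Rightarrow> complex^'n) \<Rightarrow>
    (real^'n) \<times> (real^'n) \<Rightarrow> complex^'n" where
  "frame u v p = (\<Sum>i\<in>UNIV. fst p $ i *\<^sub>R u i + snd p $ i *\<^sub>R v i)"

lemma linear_frame: "linear (frame u v)"
  by (rule linearI)
    (simp_all add: frame_def scaleR_add_left sum.distrib scaleR_sum_right algebra_simps)

lemma frame_axis_fst [simp]: "frame u v (axis i 1, 0) = u i"
proof -
  have "(\<Sum>j\<in>UNIV. axis i (1::real) $ j *\<^sub>R u j) = (\<Sum>j\<in>UNIV. if j = i then u j else 0)"
    by (rule sum.cong) (auto simp: axis_def)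
  then show ?thesis by (simp add: frame_def)
qed

lemma frame_axis_snd [simp]: "frame u v (0, axis i 1) = v i"
proof -
  have "(\<Sum>j\<in>UNIV. axis i (1::real) $ j *\<^sub>R v j) = (\<Sum>j\<in>UNIV. if j = i then v j else 0)"
    by (rule sum.cong) (auto simp: axis_def)
  then show ?thesis by (simp add: frame_def)
qed

definition of_int_vec :: "('n \<Rightarrow> int) \<Rightarrow> real^'n" where
  "of_int_vec a = (\<chi> i. real_of_int (a i))"

definition int_points :: "((real^'n) \<times> (real^'n)) set" where
  "int_points = {(of_int_vec a, of_int_vec b) | a b. True}"

lemma of_int_vec_diff: "of_int_vec a - of_int_vec b = of_int_vec (\<lambda>k. a k - b k)"
  by (simp add: of_int_vec_def vec_eq_iff)

lemma rmat_mult_axis: "rmat A *v axis i 1 = of_int_vec (\<lambda>k. A $ k $ i)"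
  by (simp add: vec_eq_iff matrix_vector_mult_axis_nth rmat_def of_int_vec_def)

lemma axis_eq_of_int_vec: "axis i 1 = of_int_vec (\<lambda>k. mat 1 $ k $ i)"
  by (simp add: of_int_vec_def axis_def mat_def vec_eq_iff)

lemma axes_in_int_points: "(axis i 1, 0::real^'n) \<in> int_points" "(0, axis i 1) \<in> int_points"
proof -
  have "0 = of_int_vec (\<lambda>_::'n. 0)"
    by (simp add: of_int_vec_def vec_eq_iff)
  then show "(axis i 1, 0) \<in> int_points" "(0, axis i 1) \<in> int_points"
    unfolding int_points_def axis_eq_of_int_vec by auto
qed

lemma int_points_add:
  assumes "p \<in> int_points" "q \<in> int_points"
  shows "p + q \<in> int_points"
proof -
  obtain a b c d where "p = (of_int_vec a, of_int_vec b)" "q = (of_int_vec c, of_int_vec d)"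
    using assms unfolding int_points_def by blast
  then have "p + q = (of_int_vec (\<lambda>i. a i + c i), of_int_vec (\<lambda>i. b i + d i))"
    by (simp add: of_int_vec_def vec_eq_iff)
  then show ?thesis
    unfolding int_points_def by blast
qed

lemma int_points_uminus:
  assumes "p \<in> int_points"
  shows "- p \<in> int_points"
proof -
  obtain a b where "p = (of_int_vec a, of_int_vec b)"
    using assms unfolding int_points_def by blast
  then have "- p = (of_int_vec (\<lambda>i. - a i), of_int_vec (\<lambda>i. - b i))"
    by (simp add: of_int_vec_def vec_eq_iff)
  then show ?thesis
    unfolding int_points_def by blast
qed

lemma frame_int_point:
  "(\<Sum>i\<in>UNIV. of_int (a i) *s u i + of_int (b i) *s v i) = frame u v (of_int_vec a, of_int_vec b)"
  by (simp add: frame_def of_int_vec_def scaleR_eq_smult)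

context
  fixes L :: "(complex^'n::finite) set" and Q u v
  assumes sb: "symplectic_basis L Q u v"
begin

lemma symplectic_basis_lattice: "L = frame u v ` int_points"
  using sb unfolding symplectic_basis_def int_points_def by (auto simp: frame_int_point)

lemma symplectic_basis_inj: "inj (frame u v)"
proof (rule linear_injective_0[OF linear_frame, THEN iffD2], intro allI impI)
  fix p assume "frame u v p = 0"
  then have "(\<lambda>i. fst p $ i) = (\<lambda>_. 0) \<and> (\<lambda>i. snd p $ i) = (\<lambda>_. 0)"
    using sb unfolding symplectic_basis_def frame_def by blast
  then show "p = 0"
    by (simp add: prod_eq_iff vec_eq_iff fun_eq_iff)
qed

lemma symplectic_basis_Q:
  "Q (u i) (v j) = (if i = j then 1 else 0)" "Q (u i) (u j) = 0" "Q (v i) (v j) = 0"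
  using sb unfolding symplectic_basis_def by blast+

lemma symplectic_basis_add:
  assumes "x \<in> L" "y \<in> L"
  shows "x + y \<in> L"
proof -
  obtain p q where "p \<in> int_points" "q \<in> int_points" "x = frame u v p" "y = frame u v q"
    using assms unfolding symplectic_basis_lattice by blast
  moreover have "frame u v p + frame u v q = frame u v (p + q)"
    by (simp add: linear_add[OF linear_frame])
  ultimately show ?thesis
    unfolding symplectic_basis_lattice by (simp add: int_points_add)
qed

lemma symplectic_basis_uminus:
  assumes "x \<in> L"
  shows "- x \<in> L"
proof -
  obtain p where "p \<in> int_points" "x = frame u v p"
    using assms unfolding symplectic_basis_lattice by blast
  moreover have "- frame u v p = frame u v (- p)"
    by (simp add: linear_neg[OF linear_frame])
  ultimately show ?thesis
    unfolding symplectic_basis_lattice by (simp add: int_points_uminus)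
qed

lemma symplectic_basis_in_lattice: "u i \<in> L" "v i \<in> L"
  using axes_in_int_points[of i] unfolding symplectic_basis_lattice
  by (metis frame_axis_fst frame_axis_snd imageI)+

lemma dvd_if_scaled_int_point_in_lattice:
  assumes "N \<noteq> 0" "(1 / real_of_int N) *\<^sub>R frame u v (of_int_vec a, of_int_vec b) \<in> L"
  shows "N dvd a k" "N dvd b k"
proof -
  obtain a' b' where "(1 / real_of_int N) *\<^sub>R frame u v (of_int_vec a, of_int_vec b)
      = frame u v (of_int_vec a', of_int_vec b')"
    using assms(2) unfolding symplectic_basis_lattice int_points_def by auto
  then have "(1 / real_of_int N) *\<^sub>R (of_int_vec a, of_int_vec b) = (of_int_vec a', of_int_vec b')"
    using symplectic_basis_inj by (simp add: linear_scale[OF linear_frame, symmetric] inj_eq)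
  then have "real_of_int (a k) = real_of_int N * real_of_int (a' k)"
    "real_of_int (b k) = real_of_int N * real_of_int (b' k)"
    using assms(1) by (auto simp: of_int_vec_def vec_eq_iff field_simps)
  then show "N dvd a k" "N dvd b k"
    by (metis dvd_triv_left of_int_eq_iff of_int_mult)+
qed

lemma Im_hermitian_form_frame:
  assumes "hermitian_form H" "Q = (\<lambda>a b. Im (H a b))"
  shows "Im (H (frame u v p) (frame u v q)) = symp_form p q"
proof -
  have "(\<lambda>p q. Im (H (frame u v p) (frame u v q))) = symp_form"
  proof (rule bilinear_eq_stdbasis)
    show "bilinear (\<lambda>p q. Im (H (frame u v p) (frame u v q)))"
      by (rule bilinear_Im_hermitian_form[OF assms(1) linear_frame])
    have Q: "Im (H (u i) (v j)) = (if i = j then 1 else 0)" "Im (H (v j) (u i)) = - (if i = j then 1 else 0)"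
      "Im (H (u i) (u j)) = 0" "Im (H (v i) (v j)) = 0" for i j
      using symplectic_basis_Q[of i j] hermitian_form_cnj[OF assms(1), of "u i" "v j"]
      by (simp_all add: assms(2))
    show "Im (H (frame u v p) (frame u v q)) = symp_form p q"
      if "p \<in> Basis" "q \<in> Basis" for p q
      using that by (elim Basis_pair_vec_cases) (simp_all add: Q symp_form_def inner_axis_axis)
  qed (rule bilinear_symp_form)
  then show ?thesis by metis
qed

end

lemma integral_coordinate_matrix:
  assumes sb: "symplectic_basis L Q u v" and sb': "symplectic_basis L' Q' u' v'"
    and f: "linear f" and L: "f ` L \<subseteq> L'"
  obtains P where "\<And>p. f (frame u v p) = frame u' v' (blk_act P p)"
proof -
  have "f (u i) \<in> frame u' v' ` int_points" "f (v i) \<in> frame u' v' ` int_points" for i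
    using L symplectic_basis_in_lattice[OF sb] unfolding symplectic_basis_lattice[OF sb'] by blast+
  then have "\<forall>i. \<exists>a b. f (u i) = frame u' v' (of_int_vec a, of_int_vec b)"
    "\<forall>i. \<exists>c d. f (v i) = frame u' v' (of_int_vec c, of_int_vec d)"
    unfolding int_points_def by blast+
  then obtain a b c d where
    ab: "\<And>i. f (u i) = frame u' v' (of_int_vec (a i), of_int_vec (b i))" and
    cd: "\<And>i. f (v i) = frame u' v' (of_int_vec (c i), of_int_vec (d i))"
    by metis
  define P where "P = ((\<chi> k i. a i k), (\<chi> k i. c i k), (\<chi> k i. b i k), (\<chi> k i. d i k))"
  have "f \<circ> frame u v = frame u' v' \<circ> blk_act P"
    by (rule linear_eq_on_axes)
      (simp_all add: linear_compose f linear_frame linear_blk_act ab cd P_def blk_act_def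
        rmat_mult_axis)
  then show ?thesis
    using that by (metis comp_apply)
qed

lemma coordinate_matrix_right_inverse:
  assumes inj: "inj (frame u' v')"
    and P: "\<And>p. f (frame u v p) = frame u' v' (blk_act P p)"
    and Q: "\<And>p. g (frame u' v' p) = frame u v (blk_act Q p)"
    and fg: "\<And>x. f (g x) = x"
  shows "sp_mult P Q = blk_one"
proof (rule blk_act_inject)
  fix p
  have "frame u' v' (blk_act (sp_mult P Q) p) = frame u' v' p"
    by (simp add: blk_act_sp_mult P[symmetric] Q[symmetric] fg)
  then show "blk_act (sp_mult P Q) p = blk_act blk_one p"
    using inj by (simp add: inj_eq)
qed

lemma symp_form_coordinate_matrix:
  assumes sb: "symplectic_basis L (\<lambda>a b. Im (H a b)) u v" "hermitian_form H"
    and sb': "symplectic_basis L' (\<lambda>a b. Im (H' a b)) u' v'" "hermitian_form H'"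
    and P: "\<And>p. f (frame u v p) = frame u' v' (blk_act P p)"
    and c: "\<And>a b. Im (H' (f a) (f b)) = c * Im (H a b)"
  shows "symp_form (blk_act P p) (blk_act P q) = c * symp_form p q"
  using c[of "frame u v p" "frame u v q"]
  by (simp add: P Im_hermitian_form_frame[OF sb(1,2) refl] Im_hermitian_form_frame[OF sb'(1,2) refl])

text \<open>The hypotheses say that \<open>f\<close> maps the \<open>N\<close>-torsion points \<open>u\<^sub>i/N\<close>, \<open>v\<^sub>i/N\<close> to those
  prescribed by \<open>S\<close>, modulo the lattice.\<close>

lemma blk_cong_if_torsion_points:
  assumes sb: "symplectic_basis L' Q' u' v'" and N: "N \<noteq> 0"
    and P: "\<And>p. f (frame u v p) = frame u' v' (blk_act P p)"
    and U: "\<And>i. (1 / real_of_int N) *\<^sub>R (f (u i) - frame u' v' (blk_act S (axis i 1, 0))) \<in> L'"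
    and V: "\<And>i. (1 / real_of_int N) *\<^sub>R (f (v i) - frame u' v' (blk_act S (0, axis i 1))) \<in> L'"
  shows "blk_cong N P S"
proof -
  obtain P11 P12 P21 P22 S11 S12 S21 S22
    where PS: "P = (P11, P12, P21, P22)" "S = (S11, S12, S21, S22)"
    by (cases P; cases S)
  have cols: "f (u i) - frame u' v' (blk_act S (axis i 1, 0)) = frame u' v'
      (of_int_vec (\<lambda>k. P11$k$i - S11$k$i), of_int_vec (\<lambda>k. P21$k$i - S21$k$i))"
    "f (v i) - frame u' v' (blk_act S (0, axis i 1)) = frame u' v'
      (of_int_vec (\<lambda>k. P12$k$i - S12$k$i), of_int_vec (\<lambda>k. P22$k$i - S22$k$i))" for i
    using P[of "(axis i 1, 0)"] P[of "(0, axis i 1)"]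
    by (simp_all add: PS blk_act_def rmat_mult_axis of_int_vec_diff
        flip: linear_diff[OF linear_frame])
  have "N dvd P11$k$i - S11$k$i \<and> N dvd P21$k$i - S21$k$i \<and>
        N dvd P12$k$i - S12$k$i \<and> N dvd P22$k$i - S22$k$i" for k i
    using dvd_if_scaled_int_point_in_lattice[OF sb N U[of i, unfolded cols]]
      dvd_if_scaled_int_point_in_lattice[OF sb N V[of i, unfolded cols]] by simp
  then show ?thesis
    by (simp add: PS blk_cong_def)
qed

lemma real_ppav_levelE:
  assumes "real_ppav_level N X"
  obtains u v where "pos_def_hermitian (herm X)" "antilinear_involution (kap X)"
    "kap X ` lat X = lat X" "\<And>a b. Im (herm X (kap X a) (kap X b)) = - Im (herm X a b)"
    "symplectic_basis (lat X) (\<lambda>a b. Im (herm X a b)) u v"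
    "\<And>i. lvlU X i - (1 / of_int N) *s u i \<in> lat X" "\<And>i. lvlV X i - (1 / of_int N) *s v i \<in> lat X"
    "\<And>i. kap X ((1 / of_int N) *s u i) + (1 / of_int N) *s u i \<in> lat X"
    "\<And>i. kap X ((1 / of_int N) *s v i) - (1 / of_int N) *s v i \<in> lat X"
  using assms unfolding real_ppav_level_def Let_def by blast

lemma real_ppav_level_hermitian_form: "real_ppav_level N X \<Longrightarrow> hermitian_form (herm X)"
  unfolding real_ppav_level_def Let_def by (blast intro: hermitian_form_if_pos_def)

lemma real_ppav_level_antilinear_involution: "real_ppav_level N X \<Longrightarrow> antilinear_involution (kap X)"
  unfolding real_ppav_level_def Let_def by blast

lemma real_ppav_level_lattice_add:
  "real_ppav_level N X \<Longrightarrow> a \<in> lat X \<Longrightarrow> b \<in> lat X \<Longrightarrow> a + b \<in> lat X"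
  by (metis real_ppav_levelE symplectic_basis_add)

lemma real_ppav_level_lattice_uminus:
  "real_ppav_level N X \<Longrightarrow> a \<in> lat X \<Longrightarrow> - a \<in> lat X"
  by (metis real_ppav_levelE symplectic_basis_uminus)

lemma rppav_isoD:
  assumes "rppav_iso X Y f"
  shows "vec_clinear f" "bij f" "f ` lat X = lat Y" "\<And>a b. herm Y (f a) (f b) = herm X a b"
    "\<And>a. f (kap X a) = kap Y (f a)"
    "\<And>i. f (lvlU X i) - lvlU Y i \<in> lat Y" "\<And>i. f (lvlV X i) - lvlV Y i \<in> lat Y"
  using assms unfolding rppav_iso_def vec_clinear_def by (auto simp: fun_eq_iff)

lemma rppav_isoI:
  assumes "vec_clinear f" "bij f" "f ` lat X = lat Y" "\<And>a b. herm Y (f a) (f b) = herm X a b"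
    "\<And>a. f (kap X a) = kap Y (f a)"
    "\<And>i. f (lvlU X i) - lvlU Y i \<in> lat Y" "\<And>i. f (lvlV X i) - lvlV Y i \<in> lat Y"
  shows "rppav_iso X Y f"
  using assms unfolding rppav_iso_def vec_clinear_def by (auto simp: fun_eq_iff)

lemma rppav_iso_invD:
  assumes "rppav_iso X Y f"
  shows "f (inv f y) = y" "inv f (f x) = x" "vec_clinear (inv f)" "inv f ` lat Y = lat X"
proof -
  note F = rppav_isoD[OF assms]
  show fg: "f (inv f y) = y" and gf: "inv f (f x) = x" for x y
    using F(2) by (simp_all add: bij_is_surj surj_f_inv_f bij_is_inj)
  show "vec_clinear (inv f)"
    using vec_clinear_inverse[OF F(1)] fg gf by blast
  show "inv f ` lat Y = lat X"
    using F(3) gf by (auto simp: image_image simp flip: F(3))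
qed

lemma rppav_iso_inv:
  assumes f: "rppav_iso X Y f" and X: "real_ppav_level N X"
  shows "rppav_iso Y X (inv f)"
proof -
  note F = rppav_isoD[OF f]
  note fg = rppav_iso_invD(1)[OF f] and gf = rppav_iso_invD(2)[OF f]
    and g = rppav_iso_invD(3)[OF f] and lat = rppav_iso_invD(4)[OF f]
  have lvl: "inv f (lvlU Y i) - lvlU X i = - inv f (f (lvlU X i) - lvlU Y i)"
    "inv f (lvlV Y i) - lvlV X i = - inv f (f (lvlV X i) - lvlV Y i)" for i
    by (simp_all add: vec_clinear_diff[OF g] gf)
  show ?thesis
  proof (rule rppav_isoI)
    show "bij (inv f)"
      using F(2) by (rule bij_imp_bij_inv)
    show "herm X (inv f a) (inv f b) = herm Y a b" for a b
      by (metis F(4) fg)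
    show "inv f (kap Y a) = kap X (inv f a)" for a
      by (metis F(5) fg gf)
    show "inv f (lvlU Y i) - lvlU X i \<in> lat X" "inv f (lvlV Y i) - lvlV X i \<in> lat X" for i
      unfolding lvl using F(6,7) lat real_ppav_level_lattice_uminus[OF X] by blast+
  qed (fact g lat)+
qed

lemma rppav_iso_comp:
  assumes f: "rppav_iso X Y f" and g: "rppav_iso Y W g" and W: "real_ppav_level N W"
  shows "rppav_iso X W (g \<circ> f)"
proof -
  note F = rppav_isoD[OF f] and G = rppav_isoD[OF g]
  have lvl: "g (f (lvlU X i)) - lvlU W i = g (f (lvlU X i) - lvlU Y i) + (g (lvlU Y i) - lvlU W i)"
    "g (f (lvlV X i)) - lvlV W i = g (f (lvlV X i) - lvlV Y i) + (g (lvlV Y i) - lvlV W i)" for i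
    by (simp_all add: vec_clinear_diff[OF G(1)])
  show ?thesis
  proof (rule rppav_isoI)
    show "vec_clinear (g \<circ> f)"
      using F(1) G(1) by (simp add: vec_clinear_def)
    show "bij (g \<circ> f)"
      using F(2) G(2) by (rule bij_comp)
    show "(g \<circ> f) ` lat X = lat W"
      using F(3) G(3) by (metis image_comp)
    show "(g \<circ> f) (lvlU X i) - lvlU W i \<in> lat W" "(g \<circ> f) (lvlV X i) - lvlV W i \<in> lat W" for i
      unfolding comp_apply lvl
      using F(6,7) G(3,6,7) real_ppav_level_lattice_add[OF W] by blast+
  qed (simp_all add: F(4,5) G(4,5))
qed

lemma pos_def_hermitian_pullback:
  assumes "pos_def_hermitian H" "vec_clinear f" "inj f"
  shows "pos_def_hermitian (\<lambda>a b. H (f a) (f b))"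
proof -
  have "f a \<noteq> 0" if "a \<noteq> 0" for a
    using that assms(3) linear_0[OF linear_if_vec_clinear[OF assms(2)]] by (metis injD)
  with assms(1,2) show ?thesis
    unfolding pos_def_hermitian_def vec_clinear_def by metis
qed

lemma antilinear_involution_conj:
  assumes "antilinear_involution k" "vec_clinear f" "\<And>x. f (g x) = x" "\<And>x. g (f x) = x"
  shows "antilinear_involution (\<lambda>x. g (k (f x)))"
  using assms vec_clinear_inverse[OF assms(2)]
  unfolding antilinear_involution_def vec_clinear_def by simp

lemma symplectic_basis_pullback:
  assumes sb: "symplectic_basis L Q u v" and g: "vec_clinear g"
    and fg: "\<And>x. f (g x) = x" and gf: "\<And>x. g (f x) = x"
  shows "symplectic_basis (g ` L) (\<lambda>a b. Q (f a) (f b)) (g \<circ> u) (g \<circ> v)"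
proof -
  have lin: "linear g"
    by (rule linear_if_vec_clinear[OF g])
  have real_comb: "g (\<Sum>i\<in>UNIV. a i *\<^sub>R u i + b i *\<^sub>R v i)
      = (\<Sum>i\<in>UNIV. a i *\<^sub>R (g \<circ> u) i + b i *\<^sub>R (g \<circ> v) i)" for a b :: "'a \<Rightarrow> real"
    by (simp add: linear_sum[OF lin] linear_add[OF lin] linear_scale[OF lin])
  have int_comb: "g (\<Sum>i\<in>UNIV. of_int (a i) *s u i + of_int (b i) *s v i)
      = (\<Sum>i\<in>UNIV. of_int (a i) *s (g \<circ> u) i + of_int (b i) *s (g \<circ> v) i)" for a b :: "'a \<Rightarrow> int"
    by (simp add: linear_sum[OF lin] vec_clinear_add[OF g] vec_clinear_smult[OF g])
  show ?thesis
    unfolding symplectic_basis_def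
  proof (intro conjI allI impI)
    fix a b :: "'a \<Rightarrow> real"
    assume "(\<Sum>i\<in>UNIV. a i *\<^sub>R (g \<circ> u) i + b i *\<^sub>R (g \<circ> v) i) = 0"
    then have "(\<Sum>i\<in>UNIV. a i *\<^sub>R u i + b i *\<^sub>R v i) = 0"
      by (metis real_comb fg linear_0[OF lin])
    then show "a = (\<lambda>_. 0)" "b = (\<lambda>_. 0)"
      using sb unfolding symplectic_basis_def by blast+
  next
    have "L = {(\<Sum>i\<in>UNIV. of_int (a i) *s u i + of_int (b i) *s v i) | a b :: 'a \<Rightarrow> int. True}"
      using sb unfolding symplectic_basis_def by blast
    then have "g ` L = {g (\<Sum>i\<in>UNIV. of_int (a i) *s u i + of_int (b i) *s v i) | a b. True}"
      by blast
    then show "g ` L =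
        {(\<Sum>i\<in>UNIV. of_int (a i) *s (g \<circ> u) i + of_int (b i) *s (g \<circ> v) i) | a b. True}"
      by (simp only: int_comb)
  qed (simp_all add: fg symplectic_basis_Q[OF sb])
qed

lemma rppav_iso_pullback:
  assumes f: "rppav_iso Y X f"
  shows "herm Y = (\<lambda>a b. herm X (f a) (f b))" "kap Y = (\<lambda>x. inv f (kap X (f x)))"
    "lat Y = inv f ` lat X"
  using rppav_isoD(4,5)[OF f] rppav_iso_invD(2,4)[OF f] by (auto simp: fun_eq_iff) metis

lemma torsion_conditions_pullback:
  assumes f: "rppav_iso Y X f" and sb: "symplectic_basis (lat X) Q u v"
    and lU: "\<And>i. lvlU X i - (1 / of_int N) *s u i \<in> lat X"
    and lV: "\<And>i. lvlV X i - (1 / of_int N) *s v i \<in> lat X"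
    and kU: "\<And>i. kap X ((1 / of_int N) *s u i) + (1 / of_int N) *s u i \<in> lat X"
    and kV: "\<And>i. kap X ((1 / of_int N) *s v i) - (1 / of_int N) *s v i \<in> lat X"
  defines "g \<equiv> inv f"
  shows "lvlU Y i - (1 / of_int N) *s (g \<circ> u) i \<in> lat Y"
    "lvlV Y i - (1 / of_int N) *s (g \<circ> v) i \<in> lat Y"
    "kap Y ((1 / of_int N) *s (g \<circ> u) i) + (1 / of_int N) *s (g \<circ> u) i \<in> lat Y"
    "kap Y ((1 / of_int N) *s (g \<circ> v) i) - (1 / of_int N) *s (g \<circ> v) i \<in> lat Y"
proof -
  note F = rppav_isoD[OF f] and G = rppav_iso_invD[OF f, folded g_def]
    and pb = rppav_iso_pullback[OF f, folded g_def]
  have "lvlU Y i - (1 / of_int N) *s (g \<circ> u) i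
      = g ((f (lvlU Y i) - lvlU X i) + (lvlU X i - (1 / of_int N) *s u i))"
    "lvlV Y i - (1 / of_int N) *s (g \<circ> v) i
      = g ((f (lvlV Y i) - lvlV X i) + (lvlV X i - (1 / of_int N) *s v i))"
    "kap Y ((1 / of_int N) *s (g \<circ> u) i) + (1 / of_int N) *s (g \<circ> u) i
      = g (kap X ((1 / of_int N) *s u i) + (1 / of_int N) *s u i)"
    "kap Y ((1 / of_int N) *s (g \<circ> v) i) - (1 / of_int N) *s (g \<circ> v) i
      = g (kap X ((1 / of_int N) *s v i) - (1 / of_int N) *s v i)"
    by (simp_all add: pb(2) G(1,2) vec_clinear_diff[OF G(3)] vec_clinear_add[OF G(3)]
        vec_clinear_smult[OF G(3)] vec_clinear_smult[OF F(1)])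
  then show "lvlU Y i - (1 / of_int N) *s (g \<circ> u) i \<in> lat Y"
    "lvlV Y i - (1 / of_int N) *s (g \<circ> v) i \<in> lat Y"
    "kap Y ((1 / of_int N) *s (g \<circ> u) i) + (1 / of_int N) *s (g \<circ> u) i \<in> lat Y"
    "kap Y ((1 / of_int N) *s (g \<circ> v) i) - (1 / of_int N) *s (g \<circ> v) i \<in> lat Y"
    unfolding pb(3) using F(6,7) lU lV kU kV symplectic_basis_add[OF sb] by (metis imageI)+
qed

lemma real_ppav_level_transfer:
  assumes f: "rppav_iso Y X f" and X: "real_ppav_level N X"
  shows "real_ppav_level N Y"
proof -
  note F = rppav_isoD[OF f] and G = rppav_iso_invD[OF f] and pb = rppav_iso_pullback[OF f]
  obtain u v where pdh: "pos_def_hermitian (herm X)" and ai: "antilinear_involution (kap X)"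
    and kL: "kap X ` lat X = lat X" and Qa: "\<And>a b. Im (herm X (kap X a) (kap X b)) = - Im (herm X a b)"
    and sb: "symplectic_basis (lat X) (\<lambda>a b. Im (herm X a b)) u v"
    and lU: "\<And>i. lvlU X i - (1 / of_int N) *s u i \<in> lat X"
    and lV: "\<And>i. lvlV X i - (1 / of_int N) *s v i \<in> lat X"
    and kU: "\<And>i. kap X ((1 / of_int N) *s u i) + (1 / of_int N) *s u i \<in> lat X"
    and kV: "\<And>i. kap X ((1 / of_int N) *s v i) - (1 / of_int N) *s v i \<in> lat X"
    using real_ppav_levelE[OF X] by blast
  have "pos_def_hermitian (herm Y)"
    unfolding pb(1) using pdh F(1) bij_is_inj[OF F(2)] by (rule pos_def_hermitian_pullback)
  moreover have "antilinear_involution (kap Y)"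
    unfolding pb(2) using ai F(1) G(1,2) by (rule antilinear_involution_conj)
  moreover have "kap Y ` lat Y = lat Y"
    unfolding pb(2,3) using kL by (simp add: image_image G(1) flip: image_image[of "inv f" "kap X"])
  moreover have "Im (herm Y (kap Y a) (kap Y b)) = - Im (herm Y a b)" for a b
    by (simp add: pb(1,2) G(1) Qa)
  moreover have "symplectic_basis (lat Y) (\<lambda>a b. Im (herm Y a b)) (inv f \<circ> u) (inv f \<circ> v)"
    unfolding pb(1,3) using symplectic_basis_pullback[OF sb G(3) G(1,2)] by simp
  ultimately show ?thesis
    unfolding real_ppav_level_def Let_def
    using torsion_conditions_pullback[OF f sb lU lV kU kV] by blast
qed

lemma iso_coordinate_matrix:
  assumes sbX: "symplectic_basis (lat X) (\<lambda>a b. Im (herm X a b)) u v"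
    and sbY: "symplectic_basis (lat Y) (\<lambda>a b. Im (herm Y a b)) u' v'"
    and X: "real_ppav_level N X" and Y: "real_ppav_level N Y"
    and f: "rppav_iso X Y f" and N: "N \<noteq> 0"
    and U: "\<And>i. (1 / real_of_int N) *\<^sub>R (f (u i) - u' i) \<in> lat Y"
    and V: "\<And>i. (1 / real_of_int N) *\<^sub>R (f (v i) - v' i) \<in> lat Y"
  obtains P where "\<And>p. f (frame u v p) = frame u' v' (blk_act P p)"
    "blk_transpose P \<in> Gamma N"
proof -
  note F = rppav_isoD[OF f] and G = rppav_isoD[OF rppav_iso_inv[OF f X]]
  have fg: "f (inv f x) = x" for x
    using F(2) by (simp add: bij_is_surj surj_f_inv_f)
  obtain P where P: "\<And>p. f (frame u v p) = frame u' v' (blk_act P p)"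
    using integral_coordinate_matrix[OF sbX sbY linear_if_vec_clinear[OF F(1)]] F(3) by blast
  obtain Q where Q: "\<And>p. inv f (frame u' v' p) = frame u v (blk_act Q p)"
    using integral_coordinate_matrix[OF sbY sbX linear_if_vec_clinear[OF G(1)]] G(3) by blast
  have "symp_form (blk_act P p) (blk_act P q) = symp_form p q" for p q
    using symp_form_coordinate_matrix[OF sbX real_ppav_level_hermitian_form[OF X]
        sbY real_ppav_level_hermitian_form[OF Y] P, where c = 1] F(4) by simp
  then have "sp_mult (blk_transpose P) (sp_mult blk_J P) = blk_J"
    by (rule symplectic_if_preserves_symp_form)
  moreover have "sp_mult P Q = blk_one"
    using symplectic_basis_inj[OF sbY] P Q fg by (rule coordinate_matrix_right_inverse)
  ultimately have "symplectic_int (blk_transpose P)"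
    unfolding symplectic_int_iff by (simp add: symplectic_transpose)
  moreover have "blk_cong N P blk_one"
    by (rule blk_cong_if_torsion_points[OF sbY N P]) (simp_all add: U V)
  then have "blk_cong N (blk_transpose P) blk_one"
    using blk_cong_transpose by fastforce
  ultimately show ?thesis
    using that P by (simp add: Gamma_iff)
qed

lemma real_structure_coordinate_matrix:
  assumes X: "real_ppav_level N X" and N: "N \<noteq> 0"
    and sb: "symplectic_basis (lat X) (\<lambda>a b. Im (herm X a b)) u v"
    and kU: "\<And>i. kap X ((1 / of_int N) *s u i) + (1 / of_int N) *s u i \<in> lat X"
    and kV: "\<And>i. kap X ((1 / of_int N) *s v i) - (1 / of_int N) *s v i \<in> lat X"
  obtains K where "\<And>p. kap X (frame u v p) = frame u v (blk_act K p)"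
    "sp_mult K K = blk_one" "sp_mult (blk_transpose K) (sp_mult blk_J K) = blk_neg blk_J"
    "blk_cong N K blk_E"
proof -
  have kL: "kap X ` lat X = lat X" and Qa: "\<And>a b. Im (herm X (kap X a) (kap X b)) = - Im (herm X a b)"
    using X unfolding real_ppav_level_def Let_def by blast+
  have ai: "antilinear_involution (kap X)"
    by (rule real_ppav_level_antilinear_involution[OF X])
  then have lin: "linear (kap X)" and invol: "\<And>x. kap X (kap X x) = x"
    by (simp_all add: linear_if_antilinear_involution antilinear_involution_def)
  obtain K where K: "\<And>p. kap X (frame u v p) = frame u v (blk_act K p)"
    using integral_coordinate_matrix[OF sb sb lin] kL by blast
  have "sp_mult K K = blk_one"
    using symplectic_basis_inj[OF sb] K K invol by (rule coordinate_matrix_right_inverse)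
  moreover have "symp_form (blk_act K p) (blk_act K q) = - symp_form p q" for p q
    using symp_form_coordinate_matrix[OF sb real_ppav_level_hermitian_form[OF X]
        sb real_ppav_level_hermitian_form[OF X] K, where c = "-1"] Qa by simp
  then have "sp_mult (blk_transpose K) (sp_mult blk_J K) = blk_neg blk_J"
    by (rule antisymplectic_if_reverses_symp_form)
  moreover have "blk_cong N K blk_E"
  proof (rule blk_cong_if_torsion_points[OF sb N K])
    have neg_u: "frame u v (- axis i 1, 0) = - u i" for i
      using linear_neg[OF linear_frame, of u v "(axis i 1, 0)"] by simp
    show "(1 / real_of_int N) *\<^sub>R (kap X (u i) - frame u v (blk_act blk_E (axis i 1, 0))) \<in> lat X"
      "(1 / real_of_int N) *\<^sub>R (kap X (v i) - frame u v (blk_act blk_E (0, axis i 1))) \<in> lat X" for i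
      using kU[of i] kV[of i]
      by (simp_all add: blk_act_E one_over_of_int_smult linear_scale[OF lin] neg_u
          scaleR_add_right scaleR_diff_right)
  qed
  ultimately show ?thesis
    using K that by blast
qed

lemma Gamma_if_real_structure_matrix:
  assumes KK: "sp_mult K K = blk_one"
    and anti: "sp_mult (blk_transpose K) (sp_mult blk_J K) = blk_neg blk_J"
    and cong: "blk_cong N K blk_E"
  shows "sp_mult blk_E (blk_transpose K) \<in> Gamma N"
proof -
  have "sp_mult (blk_transpose (sp_mult blk_E (blk_transpose K))) (sp_mult blk_J (sp_mult blk_E (blk_transpose K)))
      = sp_mult K (sp_mult (sp_mult blk_E (sp_mult blk_J blk_E)) (blk_transpose K))"
    by (simp add: blk_transpose_sp_mult sp_mult_assoc)
  also have "\<dots> = blk_J"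
    using antisymplectic_transpose[OF anti KK]
    by (simp add: sp_mult_E_J_E sp_mult_neg_left sp_mult_neg_right)
  finally have "symplectic_int (sp_mult blk_E (blk_transpose K))"
    by (simp add: symplectic_int_iff)
  moreover have "blk_cong N (sp_mult blk_E (blk_transpose K)) blk_one"
    using blk_cong_E_mult[OF blk_cong_transpose[OF cong]] by (simp add: sp_mult_E_E)
  ultimately show ?thesis
    by (simp add: Gamma_iff)
qed

section \<open>The Siegel upper half space and the varieties \<open>A\<^sub>Z\<close>\<close>

definition ReM :: "complex^'n^'n \<Rightarrow> real^'n^'n" where
  "ReM Z = (\<chi> i j. Re (Z$i$j))"

definition sesq_form :: "real^'n^'n \<Rightarrow> complex^'n \<Rightarrow> complex^'n \<Rightarrow> complex" where
  "sesq_form G a b = (\<Sum>i\<in>UNIV. \<Sum>j\<in>UNIV. a$i * complex_of_real (G$i$j) * cnj (b$j))"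

lemma Im_prod_of_real_cnj: "Im (a * complex_of_real g * cnj b) = g * (Im a * Re b - Re a * Im b)"
  by (simp add: algebra_simps)

lemma Re_prod_of_real_cnj: "Re (a * complex_of_real g * cnj b) = g * (Re a * Re b + Im a * Im b)"
  by (simp add: algebra_simps)

lemma Im_sesq_form_axes: "Im (sesq_form G (axis i 1) (axis j 1)) = 0"
proof -
  have real_axis: "Im (axis k 1 $ l :: complex) = 0" for k l
    by (simp add: axis_def)
  show ?thesis
    by (simp add: sesq_form_def Im_prod_of_real_cnj real_axis)
qed

lemma Im_sesq_form_column_axis:
  "Im (sesq_form G (column i Z) (axis j 1)) = (transpose (ImM Z) ** G) $ i $ j"
proof -
  have "(\<Sum>l\<in>UNIV. x * complex_of_real (G $ k $ l) * cnj (axis j 1 $ l))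
      = x * complex_of_real (G $ k $ j)" for x k
    by (simp add: axis_def if_distrib cong: if_cong)
  then show ?thesis
    by (simp add: sesq_form_def column_def ImM_def matrix_matrix_mult_def transpose_def)
qed

lemma Im_sesq_form_columns:
  fixes G :: "real^'n::finite^'n" and Z :: "complex^'n^'n"
  shows "Im (sesq_form G (column i Z) (column j Z))
    = ((transpose (ImM Z) ** G) ** ReM Z) $ i $ j - ((transpose (ReM Z) ** G) ** ImM Z) $ i $ j"
proof -
  have triple: "(\<Sum>k\<in>UNIV. \<Sum>l\<in>UNIV. A$k$i * B$k$l * C$l$j) = ((transpose A ** B) ** C) $ i $ j"
    for A B C :: "real^'n^'n"
    by (simp add: matrix_matrix_mult_def transpose_def sum_distrib_right) (rule sum.swap)
  show ?thesis
    by (simp add: sesq_form_def column_def Im_prod_of_real_cnj ImM_def ReM_def algebra_simps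
        sum_subtractf flip: triple)
qed

abbreviation siegel_frame :: "complex^'n^'n \<Rightarrow> (real^'n) \<times> (real^'n) \<Rightarrow> complex^'n" where
  "siegel_frame Z \<equiv> frame (\<lambda>i. column i Z) (\<lambda>i. axis i 1)"

lemma F_Z_eq: "F_Z Z x y = Z *v cvec x + cvec y"
  by (simp add: F_Z_def cvec_def)

lemma siegel_frame_eq_F_Z: "siegel_frame Z (x, y) = F_Z Z x y"
proof -
  have "siegel_frame Z = (\<lambda>p. Z *v cvec (fst p) + cvec (snd p))"
    by (rule linear_eq_on_axes)
      (auto intro!: linearI simp: linear_frame cvec_add cvec_scaleR cvec_axis matrix_vector_mult_axis
        matrix_vector_right_distrib matrix_vector_mult_scaleR_gen scaleR_add_right)
  then show ?thesis
    by (simp add: F_Z_eq)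
qed

lemma H_Z_eq_sesq_form: "H_Z Z = sesq_form (matrix_inv (ImM Z))"
  by (simp add: fun_eq_iff H_Z_def sesq_form_def)

context
  fixes Z :: "complex^'n::finite^'n"
  assumes Z: "Z \<in> siegel"
begin

lemma siegel_transpose: "transpose Z = Z"
  using Z by (simp add: siegel_def)

lemma siegel_nth_sym: "Z $ i $ j = Z $ j $ i"
  by (metis siegel_transpose transpose_nth)

lemma siegel_ImM_transpose: "transpose (ImM Z) = ImM Z"
  by (simp add: ImM_def transpose_def vec_eq_iff siegel_nth_sym)

lemma siegel_ReM_transpose: "transpose (ReM Z) = ReM Z"
  by (simp add: ReM_def transpose_def vec_eq_iff siegel_nth_sym)

lemma siegel_cnjM_transpose: "transpose (cnjM Z) = cnjM Z"
  by (simp add: cnjM_transpose[symmetric] siegel_transpose)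

lemma siegel_ImM_inverse:
  "ImM Z ** matrix_inv (ImM Z) = mat 1" "matrix_inv (ImM Z) ** ImM Z = mat 1"
proof -
  have "ImM Z *v x = 0 \<Longrightarrow> x = 0" for x
    using Z unfolding siegel_def posdef_real_def by force
  then have "invertible (ImM Z)"
    using matrix_left_invertible_ker invertible_left_inverse by blast
  then show "ImM Z ** matrix_inv (ImM Z) = mat 1" "matrix_inv (ImM Z) ** ImM Z = mat 1"
    unfolding invertible_def matrix_inv_def by (metis (mono_tags, lifting) someI_ex)+
qed

lemma siegel_F_Z_eq_0:
  assumes "F_Z Z x y = 0"
  shows "x = 0" "y = 0"
proof -
  have "(ImM Z *v x) $ k = Im (F_Z Z x y $ k)" for k
    by (simp add: F_Z_eq matrix_vector_mult_def ImM_def cvec_def)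
  then have "ImM Z *v x = 0"
    using assms by (simp add: vec_eq_iff)
  then show "x = 0"
    using Z unfolding siegel_def posdef_real_def by force
  then have "cvec y = 0"
    using assms by (simp add: F_Z_eq)
  then show "y = 0"
    by (simp add: cvec_def vec_eq_iff)
qed

lemma Im_H_Z_siegel_frame:
  "Im (H_Z Z (column i Z) (axis j 1)) = (if i = j then 1 else 0)"
  "Im (H_Z Z (column i Z) (column j Z)) = 0"
  "Im (H_Z Z (axis i 1) (axis j 1)) = 0"
proof -
  show "Im (H_Z Z (column i Z) (axis j 1)) = (if i = j then 1 else 0)"
    by (simp add: H_Z_eq_sesq_form Im_sesq_form_column_axis siegel_ImM_transpose
        siegel_ImM_inverse mat_def)
  have "Im (H_Z Z (column i Z) (column j Z)) = ReM Z $ i $ j - ReM Z $ j $ i"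
    by (simp add: H_Z_eq_sesq_form Im_sesq_form_columns siegel_ImM_transpose siegel_ImM_inverse
        transpose_nth flip: matrix_mul_assoc)
  then show "Im (H_Z Z (column i Z) (column j Z)) = 0"
    by (metis siegel_ReM_transpose transpose_nth diff_self)
  show "Im (H_Z Z (axis i 1) (axis j 1)) = 0"
    by (simp add: H_Z_eq_sesq_form Im_sesq_form_axes)
qed

lemma symplectic_basis_siegel:
  "symplectic_basis (L_Z Z) (\<lambda>a b. Im (H_Z Z a b)) (\<lambda>i. column i Z) (\<lambda>i. axis i 1)"
  unfolding symplectic_basis_def
proof (intro conjI allI impI)
  fix a b :: "'n \<Rightarrow> real"
  assume "(\<Sum>i\<in>UNIV. a i *\<^sub>R column i Z + b i *\<^sub>R axis i 1) = 0"
  then have "F_Z Z (\<chi> i. a i) (\<chi> i. b i) = 0"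
    by (simp add: siegel_frame_eq_F_Z[symmetric] frame_def)
  then have "(\<chi> i. a i) = 0" "(\<chi> i. b i) = 0"
    by (rule siegel_F_Z_eq_0)+
  then show "a = (\<lambda>_. 0)" "b = (\<lambda>_. 0)"
    by (simp_all add: vec_eq_iff fun_eq_iff)
next
  show "L_Z Z = {\<Sum>i\<in>UNIV. of_int (a i) *s column i Z + of_int (b i) *s axis i 1 | a b. True}"
    by (simp add: L_Z_def frame_int_point siegel_frame_eq_F_Z of_int_vec_def)
qed (simp_all add: Im_H_Z_siegel_frame)

end

lemma siegel_frame_Pair: "siegel_frame Z (x, y) = Z *v cvec x + cvec y"
  by (simp add: siegel_frame_eq_F_Z F_Z_eq)

lemma lvl_AZ:
  "lvlU (AZ N g Z) i = (1 / real_of_int N) *\<^sub>R column i Z"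
  "lvlV (AZ N g Z) i = (1 / real_of_int N) *\<^sub>R axis i 1"
  by (simp_all add: AZ_def F_Z_eq axis_eq_scaleR[of i "1 / real_of_int N"] cvec_scaleR cvec_axis
      matrix_vector_mult_scaleR_gen matrix_vector_mult_axis)

lemma unitary_if_kappa_Z_involutive:
  fixes A B C D :: "int^'n::finite^'n" and Z :: "complex^'n^'n"
  defines "W \<equiv> cmat C ** Z + cmat D"
  assumes "\<And>M. kappa_Z (A,B,C,D) Z (kappa_Z (A,B,C,D) Z M) = M"
  shows "W ** cnjM W = mat 1" "cnjM W ** W = mat 1"
proof -
  have TT: "transpose W ** cnjM (transpose W) = mat 1"
    unfolding matrix_eq using assms(2)
    by (simp add: kappa_Z_def W_def cnjv_mult matrix_vector_mul_assoc del: transpose_matrix_vector)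
  have TT': "cnjM (transpose W) ** transpose W = mat 1"
    using arg_cong[OF TT, of cnjM] by (simp add: cnjM_mult)
  show "W ** cnjM W = mat 1" "cnjM W ** W = mat 1"
    using arg_cong[OF TT', of transpose] arg_cong[OF TT, of transpose]
    by (simp_all add: matrix_transpose_mul cnjM_transpose)
qed

lemma sp_act_eq_tauZ_iff:
  fixes A B C D :: "int^'n::finite^'n" and Z :: "complex^'n^'n"
  defines "W \<equiv> cmat C ** Z + cmat D"
  assumes "W ** cnjM W = mat 1" "cnjM W ** W = mat 1"
  shows "sp_act (A,B,C,D) Z = tauZ Z \<longleftrightarrow> cmat A ** Z + cmat B = - (cnjM Z ** W)"
proof -
  have act: "sp_act (A,B,C,D) Z = (cmat A ** Z + cmat B) ** cnjM W"
    using matrix_inv_unique[OF assms(2,3)] by (simp add: sp_act_def W_def)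
  show ?thesis
  proof
    assume "sp_act (A,B,C,D) Z = tauZ Z"
    then have "(cmat A ** Z + cmat B) ** (cnjM W ** W) = - cnjM Z ** W"
      by (simp add: act tauZ_def matrix_mul_assoc)
    then show "cmat A ** Z + cmat B = - (cnjM Z ** W)"
      by (simp add: assms(3) matrix_neg_mul)
  next
    assume "cmat A ** Z + cmat B = - (cnjM Z ** W)"
    then show "sp_act (A,B,C,D) Z = tauZ Z"
      by (simp add: act tauZ_def matrix_neg_mul assms(2) flip: matrix_mul_assoc)
  qed
qed

lemma sp_mult_transpose_E:
  "sp_mult (blk_transpose (A,B,C,D)) blk_E = (- transpose A, transpose C, - transpose B, transpose D)"
  by (simp add: sp_mult_def blk_transpose_def blk_E_def matrix_mul_simps)

text \<open>In the coordinates of the standard frame, \<open>\<kappa>(\<gamma>, Z)\<close> differs from the integral block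
  \<open>\<gamma>\<^sup>T E\<close> by a term that vanishes exactly when \<open>\<gamma>\<cdot>Z = \<tau>(Z)\<close>; on the \<open>y\<close>-half it always agrees.\<close>

lemma kappa_Z_siegel_frame:
  fixes A B C D :: "int^'n::finite^'n" and Z :: "complex^'n^'n"
  defines "W \<equiv> cmat C ** Z + cmat D"
  assumes Z: "Z \<in> siegel"
  shows "kappa_Z (A,B,C,D) Z (siegel_frame Z (x, y))
    = siegel_frame Z (blk_act (sp_mult (blk_transpose (A,B,C,D)) blk_E) (x, y))
      + transpose (cnjM Z ** W + cmat A ** Z + cmat B) *v cvec x"
proof -
  have T: "transpose W = Z ** cmat (transpose C) + cmat (transpose D)"
    by (simp add: W_def transpose_add matrix_transpose_mul siegel_transpose[OF Z] cmat_transpose)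
  have "kappa_Z (A,B,C,D) Z (siegel_frame Z (x, y))
      = transpose W *v cvec y + (transpose W ** cnjM Z) *v cvec x"
    by (simp add: kappa_Z_def siegel_frame_Pair W_def cnjv_add cnjv_mult
        matrix_vector_right_distrib matrix_vector_mul_assoc add.commute del: transpose_matrix_vector)
  moreover have "siegel_frame Z (blk_act (sp_mult (blk_transpose (A,B,C,D)) blk_E) (x, y))
      = (Z ** cmat (transpose C) + cmat (transpose D)) *v cvec y
        - (Z ** cmat (transpose A) + cmat (transpose B)) *v cvec x"
    by (simp add: siegel_frame_Pair sp_mult_transpose_E blk_act_def rmat_uminus matrix_neg_mul_vector
        cvec_diff matrix_vector_mult_diff_distrib matrix_vector_mult_add_rdistrib
        matrix_vector_mul_assoc cmat_mult_cvec[symmetric] algebra_simps)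
  moreover have "transpose (cnjM Z ** W + cmat A ** Z + cmat B)
      = transpose W ** cnjM Z + (Z ** cmat (transpose A) + cmat (transpose B))"
    by (simp add: transpose_add matrix_transpose_mul siegel_transpose[OF Z]
        siegel_cnjM_transpose[OF Z] cmat_transpose add.assoc)
  ultimately show ?thesis
    unfolding T by (simp add: matrix_vector_mult_add_rdistrib)
qed

lemma kappa_Z_add: "kappa_Z g Z (x + y) = kappa_Z g Z x + kappa_Z g Z y"
  by (cases g) (simp add: kappa_Z_def cnjv_add matrix_vector_right_distrib del: transpose_matrix_vector)

lemma kappa_Z_smult: "kappa_Z g Z (c *s x) = cnj c *s kappa_Z g Z x"
  by (cases g) (simp add: kappa_Z_def cnjv_smult vec_clinear_smult[OF vec_clinear_matrix_vector_mult]
      del: transpose_matrix_vector)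

lemma kappa_Z_siegel_frame_iff:
  fixes A B C D :: "int^'n::finite^'n" and Z :: "complex^'n^'n"
  defines "W \<equiv> cmat C ** Z + cmat D"
  assumes Z: "Z \<in> siegel"
  shows "(\<forall>p. kappa_Z (A,B,C,D) Z (siegel_frame Z p)
            = siegel_frame Z (blk_act (sp_mult (blk_transpose (A,B,C,D)) blk_E) p))
    \<longleftrightarrow> cmat A ** Z + cmat B = - (cnjM Z ** W)"
proof -
  have "(\<forall>p. kappa_Z (A,B,C,D) Z (siegel_frame Z p)
            = siegel_frame Z (blk_act (sp_mult (blk_transpose (A,B,C,D)) blk_E) p))
      \<longleftrightarrow> (\<forall>x. transpose (cnjM Z ** W + cmat A ** Z + cmat B) *v cvec x = 0 *v cvec x)"
    by (auto simp: kappa_Z_siegel_frame[OF Z] W_def)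
  also have "\<dots> \<longleftrightarrow> cnjM Z ** W + cmat A ** Z + cmat B = 0"
    by (metis complex_matrix_eq_iff_on_real transpose_0 transpose_transpose)
  also have "\<dots> \<longleftrightarrow> cmat A ** Z + cmat B = - (cnjM Z ** W)"
    by (simp add: eq_neg_iff_add_eq_0 add_ac)
  finally show ?thesis .
qed

lemma kappa_Z_coordinates:
  assumes Z: "Z \<in> siegel" and inv: "antilinear_involution (kappa_Z \<gamma> Z)"
    and act: "sp_act \<gamma> Z = tauZ Z"
  shows "kappa_Z \<gamma> Z (siegel_frame Z p)
    = siegel_frame Z (blk_act (sp_mult (blk_transpose \<gamma>) blk_E) p)"
proof -
  obtain A B C D where \<gamma>: "\<gamma> = (A,B,C,D)"
    by (cases \<gamma>)
  have "\<And>M. kappa_Z \<gamma> Z (kappa_Z \<gamma> Z M) = M"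
    using inv unfolding antilinear_involution_def by blast
  then have "(cmat C ** Z + cmat D) ** cnjM (cmat C ** Z + cmat D) = mat 1"
    "cnjM (cmat C ** Z + cmat D) ** (cmat C ** Z + cmat D) = mat 1"
    unfolding \<gamma> by (rule unitary_if_kappa_Z_involutive)+
  then show ?thesis
    using act kappa_Z_siegel_frame_iff[OF Z] sp_act_eq_tauZ_iff unfolding \<gamma> by blast
qed

lemma sp_act_eq_tauZ_if_kappa_Z_coordinates:
  assumes Z: "Z \<in> siegel" and inv: "\<And>M. kappa_Z \<gamma> Z (kappa_Z \<gamma> Z M) = M"
    and coords: "\<And>p. kappa_Z \<gamma> Z (siegel_frame Z p)
      = siegel_frame Z (blk_act (sp_mult (blk_transpose \<gamma>) blk_E) p)"
  shows "sp_act \<gamma> Z = tauZ Z"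
proof -
  obtain A B C D where \<gamma>: "\<gamma> = (A,B,C,D)"
    by (cases \<gamma>)
  have "(cmat C ** Z + cmat D) ** cnjM (cmat C ** Z + cmat D) = mat 1"
    "cnjM (cmat C ** Z + cmat D) ** (cmat C ** Z + cmat D) = mat 1"
    using inv unfolding \<gamma> by (rule unitary_if_kappa_Z_involutive)+
  then show ?thesis
    using coords kappa_Z_siegel_frame_iff[OF Z] sp_act_eq_tauZ_iff unfolding \<gamma> by blast
qed

section \<open>Uniqueness of the cohomology class\<close>

lemma cohomologous_if_intertwining:
  assumes "blk_transpose P \<in> Gamma N"
    and "sp_mult P (sp_mult (blk_transpose \<gamma>) blk_E) = sp_mult (sp_mult (blk_transpose \<gamma>') blk_E) P"
  shows "cohomologous N \<gamma> \<gamma>'"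
proof -
  have "sp_mult (sp_mult blk_E \<gamma>) (blk_transpose P) = sp_mult (blk_transpose P) (sp_mult blk_E \<gamma>')"
    using arg_cong[OF assms(2), of blk_transpose] by (simp add: blk_transpose_sp_mult)
  then have "sp_mult \<gamma> (blk_transpose P)
      = sp_mult blk_E (sp_mult (blk_transpose P) (sp_mult blk_E \<gamma>'))"
    by (metis sp_mult_E_E sp_mult_assoc sp_mult_one_left)
  then have "sp_mult (tilde (blk_transpose P)) \<gamma>' = sp_mult \<gamma> (blk_transpose P)"
    by (simp add: tilde_eq_E_conj sp_mult_assoc)
  then show ?thesis
    using assms(1) unfolding cohomologous_def by blast
qed

lemma symplectic_basis_AZ:
  "Z \<in> siegel \<Longrightarrow> symplectic_basis (lat (AZ N \<gamma> Z)) (\<lambda>a b. Im (herm (AZ N \<gamma> Z) a b))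
     (\<lambda>i. column i Z) (\<lambda>i. axis i 1)"
  using symplectic_basis_siegel by (simp add: AZ_def)

lemma cohomologous_if_iso_AZ:
  assumes Z: "Z \<in> siegel" and Z': "Z' \<in> siegel" and N: "N \<noteq> 0"
    and XZ: "real_ppav_level N (AZ N \<gamma> Z)" and XZ': "real_ppav_level N (AZ N \<gamma>' Z')"
    and act: "sp_act \<gamma> Z = tauZ Z" and act': "sp_act \<gamma>' Z' = tauZ Z'"
    and f: "rppav_iso (AZ N \<gamma> Z) (AZ N \<gamma>' Z') f"
  shows "cohomologous N \<gamma> \<gamma>'"
proof -
  note F = rppav_isoD[OF f]
  have lin: "linear f"
    by (rule linear_if_vec_clinear[OF F(1)])
  have "(1 / real_of_int N) *\<^sub>R (f (column i Z) - column i Z') \<in> lat (AZ N \<gamma>' Z')"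
    "(1 / real_of_int N) *\<^sub>R (f (axis i 1) - axis i 1) \<in> lat (AZ N \<gamma>' Z')" for i
    using F(6,7) by (simp_all add: lvl_AZ linear_scale[OF lin] scaleR_diff_right)
  then obtain P where P: "\<And>p. f (siegel_frame Z p) = siegel_frame Z' (blk_act P p)"
    and \<Gamma>: "blk_transpose P \<in> Gamma N"
    using iso_coordinate_matrix[OF symplectic_basis_AZ[OF Z] symplectic_basis_AZ[OF Z'] XZ XZ' f N]
    by blast
  have "antilinear_involution (kappa_Z \<gamma> Z)" "antilinear_involution (kappa_Z \<gamma>' Z')"
    using real_ppav_level_antilinear_involution[OF XZ] real_ppav_level_antilinear_involution[OF XZ']
    by (simp_all add: AZ_def)
  note \<kappa> = kappa_Z_coordinates[OF Z this(1) act] kappa_Z_coordinates[OF Z' this(2) act']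
  have "sp_mult P (sp_mult (blk_transpose \<gamma>) blk_E) = sp_mult (sp_mult (blk_transpose \<gamma>') blk_E) P"
  proof (rule blk_act_inject)
    fix p
    have "siegel_frame Z' (blk_act (sp_mult P (sp_mult (blk_transpose \<gamma>) blk_E)) p)
        = f (kappa_Z \<gamma> Z (siegel_frame Z p))"
      by (simp add: blk_act_sp_mult P \<kappa>)
    also have "\<dots> = kappa_Z \<gamma>' Z' (f (siegel_frame Z p))"
      using F(5) by (simp add: AZ_def)
    also have "\<dots> = siegel_frame Z' (blk_act (sp_mult (sp_mult (blk_transpose \<gamma>') blk_E) P) p)"
      by (simp add: P \<kappa> blk_act_sp_mult)
    finally show "blk_act (sp_mult P (sp_mult (blk_transpose \<gamma>) blk_E)) p
        = blk_act (sp_mult (sp_mult (blk_transpose \<gamma>') blk_E) P) p"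
      using symplectic_basis_inj[OF symplectic_basis_siegel[OF Z']] by (simp add: inj_eq)
  qed
  then show ?thesis
    by (rule cohomologous_if_intertwining[OF \<Gamma>])
qed

lemma cohomologous_if_isomorphic:
  assumes N: "N \<noteq> 0" and X: "real_ppav_level N X" and X': "real_ppav_level N X'"
    and \<psi>: "rppav_iso X X' \<psi>"
    and Z: "Z \<in> siegel" and act: "sp_act \<gamma> Z = tauZ Z" and \<phi>: "rppav_iso (AZ N \<gamma> Z) X \<phi>"
    and Z': "Z' \<in> siegel" and act': "sp_act \<gamma>' Z' = tauZ Z'"
    and \<phi>': "rppav_iso (AZ N \<gamma>' Z') X' \<phi>'"
  shows "cohomologous N \<gamma> \<gamma>'"
proof (rule cohomologous_if_iso_AZ[OF Z Z' N _ _ act act'])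
  show XZ: "real_ppav_level N (AZ N \<gamma> Z)" and XZ': "real_ppav_level N (AZ N \<gamma>' Z')"
    using real_ppav_level_transfer \<phi> X \<phi>' X' by blast+
  show "rppav_iso (AZ N \<gamma> Z) (AZ N \<gamma>' Z') (inv \<phi>' \<circ> (\<psi> \<circ> \<phi>))"
    using rppav_iso_comp[OF rppav_iso_comp[OF \<phi> \<psi> X'] rppav_iso_inv[OF \<phi>' XZ'] XZ'] .
qed

section \<open>Existence of a Siegel model\<close>

lemma inverse_of_symmetric:
  fixes Y G :: "real^'n::finite^'n"
  assumes YG: "transpose Y ** G = mat 1" and G: "transpose G = G"
  shows "G ** Y = mat 1" "transpose Y = Y"
proof -
  have "Y ** G = mat 1"
    using arg_cong[OF matrix_left_right_inverse[THEN iffD1, OF YG], of transpose]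
    by (simp add: matrix_transpose_mul G)
  then show GY: "G ** Y = mat 1"
    by (simp add: matrix_left_right_inverse)
  have "transpose Y = (transpose Y ** G) ** Y"
    by (simp add: GY flip: matrix_mul_assoc)
  then show "transpose Y = Y"
    by (simp add: YG)
qed

lemma siegel_if_ImM_inverse_gram:
  assumes GY: "G ** ImM Z = mat 1" and Y: "transpose (ImM Z) = ImM Z"
    and G: "transpose G = G" "\<And>c. c \<noteq> 0 \<Longrightarrow> c \<bullet> (G *v c) > 0"
    and X: "transpose (ReM Z) = ReM Z"
  shows "Z \<in> siegel" "matrix_inv (ImM Z) = G"
proof -
  have "ImM Z ** G = mat 1"
    using GY by (simp add: matrix_left_right_inverse)
  then show "matrix_inv (ImM Z) = G"
    using GY by (rule matrix_inv_unique)
  have "transpose Z = Z"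
    using X Y by (simp add: vec_eq_iff transpose_def ReM_def ImM_def complex_eq_iff)
  moreover have "x \<bullet> (ImM Z *v x) > 0" if "x \<noteq> 0" for x
  proof -
    have Gx: "G *v (ImM Z *v x) = x"
      by (simp add: matrix_vector_mul_assoc GY)
    then have "ImM Z *v x \<noteq> 0"
      using that by auto
    then show ?thesis
      using G(2)[of "ImM Z *v x"] by (simp add: Gx inner_commute)
  qed
  ultimately show "Z \<in> siegel"
    by (simp add: siegel_def posdef_real_def)
qed

definition gram :: "(complex^'n \<Rightarrow> complex^'n \<Rightarrow> complex) \<Rightarrow> ('n \<Rightarrow> complex^'n) \<Rightarrow> real^'n^'n" where
  "gram H v = (\<chi> j k. Re (H (v j) (v k)))"

context
  fixes H :: "complex^'n::finite \<Rightarrow> complex^'n \<Rightarrow> complex" and L u v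
  assumes pdh: "pos_def_hermitian H" and sb: "symplectic_basis L (\<lambda>a b. Im (H a b)) u v"
begin

lemma hermitian_form_columns:
  "H (transpose (\<chi> j. v j) *v M) (transpose (\<chi> j. v j) *v M') = sesq_form (gram H v) M M'"
proof -
  have H: "hermitian_form H"
    by (rule hermitian_form_if_pos_def[OF pdh])
  have "H (v j) (v k) = complex_of_real (gram H v $ j $ k)" for j k
    using symplectic_basis_Q(3)[OF sb, of j k] by (simp add: gram_def complex_eq_iff)
  then show ?thesis
    by (simp add: sesq_form_def matrix_vector_column hermitian_form_sum_left[OF H]
        hermitian_form_sum_right[OF H] hermitian_form_smult_left[OF H]
        hermitian_form_smult_right[OF H] sum_distrib_left mult_ac)
      (rule sum.swap)
qed

lemma gram_transpose: "transpose (gram H v) = gram H v"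
proof -
  have "Re (H (v k) (v j)) = Re (H (v j) (v k))" for j k
    using hermitian_form_cnj[OF hermitian_form_if_pos_def[OF pdh], of "v j" "v k"] by simp
  then show ?thesis
    by (simp add: gram_def transpose_def vec_eq_iff)
qed

lemma gram_pos:
  assumes "c \<noteq> 0"
  shows "c \<bullet> (gram H v *v c) > 0"
proof -
  have "transpose (\<chi> j. v j) *v cvec c = frame u v (0, c)"
    by (simp add: matrix_vector_column frame_def cvec_def scaleR_eq_smult)
  moreover have "frame u v (0, c) \<noteq> 0"
    using assms symplectic_basis_inj[OF sb] linear_0[OF linear_frame]
    by (metis injD prod.inject zero_prod_def)
  ultimately have "Re (H (transpose (\<chi> j. v j) *v cvec c) (transpose (\<chi> j. v j) *v cvec c)) > 0"
    using pdh unfolding pos_def_hermitian_def by metis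
  then show ?thesis
    unfolding hermitian_form_columns
    by (simp add: sesq_form_def Re_prod_of_real_cnj cvec_def inner_vec_def matrix_vector_mult_def
        sum_distrib_left mult_ac)
qed

lemma columns_inj: "inj (\<lambda>M. transpose (\<chi> j. v j) *v M)"
proof (rule linear_injective_0[OF matrix_vector_mul_linear, THEN iffD2], intro allI impI)
  fix M :: "complex^'n"
  assume M: "transpose (\<chi> j. v j) *v M = 0"
  define a where "a = (\<chi> j. Re (M$j))"
  define b where "b = (\<chi> j. Im (M$j))"
  have "a \<bullet> (gram H v *v a) + b \<bullet> (gram H v *v b)
      = Re (H (transpose (\<chi> j. v j) *v M) (transpose (\<chi> j. v j) *v M))"
    unfolding hermitian_form_columns
    by (simp add: sesq_form_def Re_prod_of_real_cnj a_def b_def inner_vec_def matrix_vector_mult_def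
        sum_distrib_left distrib_left sum.distrib algebra_simps)
  also have "\<dots> = 0"
    using M hermitian_form_0_left[OF hermitian_form_if_pos_def[OF pdh]] by simp
  finally have sum0: "a \<bullet> (gram H v *v a) + b \<bullet> (gram H v *v b) = 0" .
  have nonneg: "c \<bullet> (gram H v *v c) \<ge> 0" for c
    using gram_pos[of c] by (cases "c = 0") auto
  have "a = 0" "b = 0"
    using gram_pos[of a] gram_pos[of b] nonneg[of a] nonneg[of b] sum0 by fastforce+
  then show "M = 0"
    by (simp add: a_def b_def vec_eq_iff complex_eq_iff)
qed

lemma bij_columns: "bij (\<lambda>M. transpose (\<chi> j. v j) *v M)"
  using columns_inj by (metis bij_def matrix_left_invertible_injective matrix_left_right_inverse
      matrix_right_invertible_surjective)

lemma columns_siegel_frame: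
  assumes "\<And>i. transpose (\<chi> j. v j) *v column i Z = u i"
  shows "transpose (\<chi> j. v j) *v siegel_frame Z p = frame u v p"
proof -
  have "transpose (\<chi> j. v j) *v axis i 1 = v i" for i
    by (simp add: matrix_vector_mult_axis column_def transpose_def del: transpose_matrix_vector)
  then have "(\<lambda>M. transpose (\<chi> j. v j) *v M) \<circ> siegel_frame Z = frame u v"
    using assms by (intro linear_eq_on_axes)
      (simp_all add: linear_compose linear_frame del: transpose_matrix_vector)
  then show ?thesis
    by (metis comp_apply)
qed

lemma exists_siegel_point:
  obtains Z where "Z \<in> siegel" "\<And>i. transpose (\<chi> j. v j) *v column i Z = u i"
    "matrix_inv (ImM Z) = gram H v"
proof -
  let ?V = "transpose (\<chi> j. v j)" and ?G = "gram H v"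
  have "\<forall>i. \<exists>z. ?V *v z = u i"
    using bij_columns by (metis bij_def surjD)
  then obtain z where z: "\<And>i. ?V *v z i = u i"
    by metis
  define Z where "Z = (\<chi> k i. z i $ k)"
  have "column i Z = z i" for i
    by (simp add: Z_def column_def)
  then have u: "?V *v column i Z = u i" for i
    by (simp only: z)
  have v: "?V *v axis i 1 = v i" for i
    by (simp add: matrix_vector_mult_axis column_def transpose_def)
  have H: "H (u i) (v j) = sesq_form ?G (column i Z) (axis j 1)"
    "H (u i) (u j) = sesq_form ?G (column i Z) (column j Z)" for i j
    using hermitian_form_columns[of "column i Z" "axis j 1"]
      hermitian_form_columns[of "column i Z" "column j Z"] by (simp_all only: u v)
  have "(transpose (ImM Z) ** ?G) $ i $ j = mat 1 $ i $ j" for i j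
    using symplectic_basis_Q(1)[OF sb, of i j]
    by (simp add: H Im_sesq_form_column_axis mat_def)
  then have YG: "transpose (ImM Z) ** ?G = mat 1"
    by (simp add: vec_eq_iff)
  have "?G ** ImM Z = mat 1" "transpose (ImM Z) = ImM Z"
    using inverse_of_symmetric[OF YG gram_transpose] by blast+
  moreover have "transpose (ReM Z) = ReM Z"
  proof -
    have "ReM Z $ i $ j - ReM Z $ j $ i = 0" for i j
      using symplectic_basis_Q(2)[OF sb, of i j] YG \<open>?G ** ImM Z = mat 1\<close>
      by (simp add: H Im_sesq_form_columns transpose_nth flip: matrix_mul_assoc)
    then show ?thesis
      by (simp add: vec_eq_iff transpose_nth)
  qed
  ultimately show ?thesis
    using that z siegel_if_ImM_inverse_gram[of ?G Z] gram_pos gram_transpose u by metis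
qed

end

lemma kappa_Z_intertwining:
  assumes Z: "Z \<in> siegel" and \<phi>: "vec_clinear \<phi>"
    and \<phi>_frame: "\<And>p. \<phi> (siegel_frame Z p) = frame u v p"
    and k: "antilinear_involution k" and K: "\<And>p. k (frame u v p) = frame u v (blk_act K p)"
    and \<gamma>: "sp_mult (blk_transpose \<gamma>) blk_E = K"
  shows "\<phi> (kappa_Z \<gamma> Z M) = k (\<phi> M)"
proof (rule antilinear_eq_on_axes[where f = "\<lambda>M. \<phi> (kappa_Z \<gamma> Z M)" and g = "\<lambda>M. k (\<phi> M)"])
  fix j
  obtain A B C D where blocks: "\<gamma> = (A,B,C,D)"
    by (cases \<gamma>)
  have "kappa_Z \<gamma> Z (axis j 1) = siegel_frame Z (blk_act K (0, axis j 1))"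
    using kappa_Z_siegel_frame[OF Z, of A B C D 0 "axis j 1"]
    by (simp add: blocks[symmetric] \<gamma> siegel_frame_Pair cvec_axis)
  then show "\<phi> (kappa_Z \<gamma> Z (axis j 1)) = k (\<phi> (axis j 1))"
    using \<phi>_frame[of "(0, axis j 1)"] by (simp add: \<phi>_frame K[symmetric] siegel_frame_Pair cvec_axis)
qed (use k \<phi> in \<open>simp_all add: kappa_Z_add kappa_Z_smult vec_clinear_add vec_clinear_smult
      antilinear_involution_def\<close>)

lemma sp_act_eq_tauZ_if_intertwining:
  assumes Z: "Z \<in> siegel" and inj: "inj \<phi>"
    and \<phi>_frame: "\<And>p. \<phi> (siegel_frame Z p) = frame u v p"
    and k: "antilinear_involution k" and K: "\<And>p. k (frame u v p) = frame u v (blk_act K p)"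
    and \<gamma>: "sp_mult (blk_transpose \<gamma>) blk_E = K"
    and intertwining: "\<And>M. \<phi> (kappa_Z \<gamma> Z M) = k (\<phi> M)"
  shows "sp_act \<gamma> Z = tauZ Z"
proof (rule sp_act_eq_tauZ_if_kappa_Z_coordinates[OF Z])
  show "kappa_Z \<gamma> Z (kappa_Z \<gamma> Z M) = M" for M
    using k inj by (simp add: injD intertwining antilinear_involution_def)
  show "kappa_Z \<gamma> Z (siegel_frame Z p)
      = siegel_frame Z (blk_act (sp_mult (blk_transpose \<gamma>) blk_E) p)" for p
    using inj by (simp add: injD \<gamma> intertwining \<phi>_frame K)
qed

lemma siegel_model:
  assumes N: "N \<noteq> 0" and X: "real_ppav_level N X"
  obtains Z \<gamma> \<phi> where "Z \<in> siegel" "\<gamma> \<in> Gamma N" "sp_act \<gamma> Z = tauZ Z"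
    "real_ppav_level N (AZ N \<gamma> Z)" "rppav_iso (AZ N \<gamma> Z) X \<phi>"
proof -
  obtain u v where pdh: "pos_def_hermitian (herm X)"
    and sb: "symplectic_basis (lat X) (\<lambda>a b. Im (herm X a b)) u v"
    and lU: "\<And>i. lvlU X i - (1 / of_int N) *s u i \<in> lat X"
    and lV: "\<And>i. lvlV X i - (1 / of_int N) *s v i \<in> lat X"
    and kU: "\<And>i. kap X ((1 / of_int N) *s u i) + (1 / of_int N) *s u i \<in> lat X"
    and kV: "\<And>i. kap X ((1 / of_int N) *s v i) - (1 / of_int N) *s v i \<in> lat X"
    by (rule real_ppav_levelE[OF X]) blast
  obtain Z where Z: "Z \<in> siegel" and Zu: "\<And>i. transpose (\<chi> j. v j) *v column i Z = u i"
    and G: "matrix_inv (ImM Z) = gram (herm X) v"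
    using exists_siegel_point[OF pdh sb] by blast
  define \<phi> where "\<phi> = (\<lambda>M. transpose (\<chi> j. v j) *v M)"
  have \<phi>: "vec_clinear \<phi>" "bij \<phi>"
    unfolding \<phi>_def by (simp_all add: vec_clinear_matrix_vector_mult bij_columns[OF pdh sb])
  have \<phi>_frame: "\<phi> (siegel_frame Z p) = frame u v p" for p
    unfolding \<phi>_def using Zu by (rule columns_siegel_frame[OF pdh sb])
  obtain K where K: "\<And>p. kap X (frame u v p) = frame u v (blk_act K p)"
    and KK: "sp_mult K K = blk_one" and anti: "sp_mult (blk_transpose K) (sp_mult blk_J K) = blk_neg blk_J"
    and cong: "blk_cong N K blk_E"
    using real_structure_coordinate_matrix[OF X N sb kU kV] by blast
  define \<gamma> where "\<gamma> = sp_mult blk_E (blk_transpose K)"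
  have \<gamma>K: "sp_mult (blk_transpose \<gamma>) blk_E = K"
    by (simp add: \<gamma>_def blk_transpose_sp_mult sp_mult_assoc sp_mult_E_E)
  note intertwining = kappa_Z_intertwining[OF Z \<phi>(1) \<phi>_frame
      real_ppav_level_antilinear_involution[OF X] K \<gamma>K]
  have "sp_act \<gamma> Z = tauZ Z"
    using Z bij_is_inj[OF \<phi>(2)] \<phi>_frame real_ppav_level_antilinear_involution[OF X] K \<gamma>K
      intertwining by (rule sp_act_eq_tauZ_if_intertwining)
  moreover have "rppav_iso (AZ N \<gamma> Z) X \<phi>"
  proof (rule rppav_isoI)
    show "\<phi> ` lat (AZ N \<gamma> Z) = lat X"
      by (simp add: AZ_def symplectic_basis_lattice[OF symplectic_basis_siegel[OF Z]]
          symplectic_basis_lattice[OF sb] image_image \<phi>_frame)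
    show "herm X (\<phi> a) (\<phi> b) = herm (AZ N \<gamma> Z) a b" for a b
      unfolding \<phi>_def hermitian_form_columns[OF pdh sb] by (simp add: AZ_def H_Z_eq_sesq_form G)
    show "\<phi> (lvlU (AZ N \<gamma> Z) i) - lvlU X i \<in> lat X" "\<phi> (lvlV (AZ N \<gamma> Z) i) - lvlV X i \<in> lat X" for i
      using symplectic_basis_uminus[OF sb lU[of i]] symplectic_basis_uminus[OF sb lV[of i]]
        \<phi>_frame[of "(axis i 1, 0)"] \<phi>_frame[of "(0, axis i 1)"]
      by (simp_all add: lvl_AZ linear_scale[OF linear_if_vec_clinear[OF \<phi>(1)]] one_over_of_int_smult)
  qed (simp_all add: \<phi> AZ_def intertwining)
  ultimately show ?thesis
    using that Z Gamma_if_real_structure_matrix[OF KK anti cong] real_ppav_level_transfer[OF _ X]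
    unfolding \<gamma>_def by blast
qed

theorem proposition7p5:
  fixes N :: int
  shows
   "(\<forall>X :: ('n::finite) rppav. N \<ge> 3 \<longrightarrow> real_ppav_level N X \<longrightarrow>
       (\<exists>Z \<gamma> \<phi>. Z \<in> siegel \<and> \<gamma> \<in> Gamma N \<and> sp_act \<gamma> Z = tauZ Z \<and>
          real_ppav_level N (AZ N \<gamma> Z) \<and> rppav_iso (AZ N \<gamma> Z) X \<phi>))
    \<and>
    (\<forall>m :: int. \<forall>(X :: 'n rppav) X' Z \<gamma> Z' \<gamma>'.
       m \<ge> 1 \<longrightarrow> N = 4 * m \<longrightarrow>
       real_ppav_level N X \<longrightarrow> real_ppav_level N X' \<longrightarrow>
       (\<exists>\<psi>. rppav_iso X X' \<psi>) \<longrightarrow>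
       Z \<in> siegel \<longrightarrow> \<gamma> \<in> Gamma N \<longrightarrow> sp_act \<gamma> Z = tauZ Z \<longrightarrow>
       (\<exists>\<phi>. rppav_iso (AZ N \<gamma> Z) X \<phi>) \<longrightarrow>
       Z' \<in> siegel \<longrightarrow> \<gamma>' \<in> Gamma N \<longrightarrow> sp_act \<gamma>' Z' = tauZ Z' \<longrightarrow>
       (\<exists>\<phi>'. rppav_iso (AZ N \<gamma>' Z') X' \<phi>') \<longrightarrow>
       cohomologous N \<gamma> \<gamma>')"
proof (intro conjI allI impI)
  fix X :: "'n rppav"
  assume "N \<ge> 3" and X: "real_ppav_level N X"
  then have "N \<noteq> 0"
    by simp
  then obtain Z \<gamma> \<phi> where "Z \<in> siegel" "\<gamma> \<in> Gamma N" "sp_act \<gamma> Z = tauZ Z"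
    "real_ppav_level N (AZ N \<gamma> Z)" "rppav_iso (AZ N \<gamma> Z) X \<phi>"
    using X by (rule siegel_model)
  then show "\<exists>Z \<gamma> \<phi>. Z \<in> siegel \<and> \<gamma> \<in> Gamma N \<and> sp_act \<gamma> Z = tauZ Z \<and>
      real_ppav_level N (AZ N \<gamma> Z) \<and> rppav_iso (AZ N \<gamma> Z) X \<phi>"
    by blast
next
  fix m :: int and X X' :: "'n rppav" and Z Z' and \<gamma> \<gamma>' :: "'n blk"
  assume "m \<ge> 1" "N = 4 * m" "real_ppav_level N X" "real_ppav_level N X'"
    "\<exists>\<psi>. rppav_iso X X' \<psi>" "Z \<in> siegel" "sp_act \<gamma> Z = tauZ Z" "\<exists>\<phi>. rppav_iso (AZ N \<gamma> Z) X \<phi>"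
    "Z' \<in> siegel" "sp_act \<gamma>' Z' = tauZ Z'" "\<exists>\<phi>'. rppav_iso (AZ N \<gamma>' Z') X' \<phi>'"
  then show "cohomologous N \<gamma> \<gamma>'"
    by (auto intro: cohomologous_if_isomorphic)
qed

end
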